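(* Let $\mu$ be a nonzero bounded positive Borel measure on $\mathbb{R}$ with bounded support. Let $\lambda>0$ and let $(f_n)\subset l^2(\mathbb{Z})$ be a maximizing sequence for $P^d_\lambda$, i.e. $\|f_n\|_{l^2}^2=\lambda$ and $\lim_n\mathcal{Q}^d_\mu(f_n,f_n,f_n,f_n)=P^d_\lambda$. Then there exist $\xi_n\in\mathbb{Z}$ such that $$\lim_{R\to\infty}\sup_{n\in\mathbb{N}}\sum_{x\in\mathbb{Z},\,|x-\xi_n|>R}|f_n(x)|^2=0.$$
   Context: $\Delta f(x)=f(x+1)+f(x-1)-2f(x)$ on $l^2(\mathbb{Z})$, $S_r=e^{ir\Delta}$; $\mathcal{Q}^d_\mu(f_1,f_2,f_3,f_4)=\sum_{x\in\mathbb{Z}}\int\overline{(S_rf_1)(x)}(S_rf_2)(x)\overline{(S_rf_3)(x)}(S_rf_4)(x)\,\mu(dr)$; $P^d_\lambda=\sup\{\mathcal{Q}^d_\mu(f,f,f,f):\|f\|_{l^2}^2=\lambda\}$. *)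

theory Defs
  imports "HOL-Analysis.Analysis" "HOL-Probability.Probability"
begin

definition in_l2 :: "(int \<Rightarrow> complex) \<Rightarrow> bool" where
  "in_l2 f \<longleftrightarrow> (\<lambda>x. (norm (f x))\<^sup>2) summable_on UNIV"

definition l2_norm_sq :: "(int \<Rightarrow> complex) \<Rightarrow> real" where
  "l2_norm_sq f = (\<Sum>\<^sub>\<infinity>x. (norm (f x))\<^sup>2)"

definition dlap :: "(int \<Rightarrow> complex) \<Rightarrow> (int \<Rightarrow> complex)" where
  "dlap f = (\<lambda>x. f (x + 1) + f (x - 1) - 2 * f x)"

text \<open>S_r = exp (i r Delta), the exponential of the bounded operator i r Delta,
  given by its (norm convergent) power series, evaluated pointwise.\<close>

definition dS :: "real \<Rightarrow> (int \<Rightarrow> complex) \<Rightarrow> (int \<Rightarrow> complex)" where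
  "dS r f = (\<lambda>x. \<Sum>k. (\<i> * complex_of_real r) ^ k / of_nat (fact k) * ((dlap ^^ k) f) x)"

definition Qd :: "real measure \<Rightarrow> (int \<Rightarrow> complex) \<Rightarrow> (int \<Rightarrow> complex) \<Rightarrow>
    (int \<Rightarrow> complex) \<Rightarrow> (int \<Rightarrow> complex) \<Rightarrow> complex" where
  "Qd \<mu> f1 f2 f3 f4 = (\<Sum>\<^sub>\<infinity>x. integral\<^sup>L \<mu> (\<lambda>r.
      cnj (dS r f1 x) * dS r f2 x * cnj (dS r f3 x) * dS r f4 x))"

text \<open>Q(f,f,f,f) is real (it equals sum of integrals of |S_r f|^4), so we take the
  supremum of its real part.\<close>

definition Pd :: "real measure \<Rightarrow> real \<Rightarrow> real" where
  "Pd \<mu> lam = Sup {Re (Qd \<mu> f f f f) | f. in_l2 f \<and> l2_norm_sq f = lam}"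

end

theory Submission
  imports Defs
begin

(* For |r| <= R0 the propagator S_r = exp(i r Delta) is dominated pointwise by the
   positive operator exp(R0 A), where A g x = g(x+1) + g(x-1) + 2 g(x) majorizes Delta term by
   term in the exponential series.  This majorant is bounded on l^2 and almost local: the part
   of its series that sees mass at distance >= N is controlled by the tail of the exponential
   series.  Hence Q(f) = sum_x int |S_r f x|^4 dmu is real, bounded and quartic-homogeneous,
   P_lam > 0, and Q(g) <= P_lam (|g|^2/lam)^2 for every g.  Splitting f into a left part, a
   window of length L and a right part gives Q(f) <= Q(left) + Q(right) + error, the error being
   small when the window carries little mass.  By strict convexity of t -> t^2, along a
   maximizing sequence every window then carries mass > eta or has one light side; a
   combinatorial argument turns this dichotomy into concentration of all but eps of the mass in
   a ball of fixed radius, and a recentering argument makes the centres independent of eps. *)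

section \<open>The positive majorant of the propagator\<close>

definition lapmaj :: "(int \<Rightarrow> real) \<Rightarrow> int \<Rightarrow> real" where
  "lapmaj g x = g (x+1) + g (x-1) + 2 * g x"

definition expw :: "real \<Rightarrow> nat \<Rightarrow> real" where
  "expw R k = R^k / fact k"

definition propmaj :: "real \<Rightarrow> (int \<Rightarrow> real) \<Rightarrow> int \<Rightarrow> real" where
  "propmaj R g x = (\<Sum>k. expw R k * (lapmaj^^k) g x)"

text \<open>Tail of the exponential series from index N on; it controls the far-field part.\<close>

definition expw_tail :: "real \<Rightarrow> nat \<Rightarrow> real" where
  "expw_tail R N = (\<Sum>k. if N \<le> k then expw R k else 0)"

lemma lapmaj_pow_Suc:
  "(lapmaj^^Suc k) g x = (lapmaj^^k) g (x+1) + (lapmaj^^k) g (x-1) + 2 * (lapmaj^^k) g x"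
  by (simp add: lapmaj_def)

lemma dlap_pow_Suc:
  "(dlap^^Suc k) f x = (dlap^^k) f (x+1) + (dlap^^k) f (x-1) - 2 * (dlap^^k) f x"
  by (simp add: dlap_def)

lemma expw_sums: "(\<lambda>k. expw R k * c^k) sums exp (R*c)"
proof -
  have "(\<lambda>n. (R*c)^n /\<^sub>R fact n) sums exp (R*c)" by (rule exp_converges)
  moreover have "(\<lambda>n. (R*c)^n /\<^sub>R fact n) = (\<lambda>k. expw R k * c^k)"
    by (auto simp: expw_def field_simps)
  ultimately show ?thesis by simp
qed

lemma expw_summable: "summable (\<lambda>k. expw R k * c^k)"
  using expw_sums sums_summable by blast

lemma expw_summable1: "summable (expw R)"
  using expw_summable[of R 1] by simp

lemma expw_suminf: "(\<Sum>k. expw R k * c^k) = exp (R*c)"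
  using expw_sums sums_unique by metis

lemma expw_nonneg: "R \<ge> 0 \<Longrightarrow> expw R k \<ge> 0"
  by (simp add: expw_def)

lemma expw_mono: "0 \<le> a \<Longrightarrow> a \<le> b \<Longrightarrow> expw a k \<le> expw b k"
  unfolding expw_def by (intro divide_right_mono power_mono) auto

lemma expw_times_pow: "expw (c*R) k = expw R k * c^k"
  by (simp add: expw_def power_mult_distrib)

text \<open>The tail weights tend to zero; this is what makes the majorant almost local.\<close>

lemma expw_tail_eq: "expw_tail R N = exp R - (\<Sum>k<N. expw R k)"
proof -
  have e: "(\<lambda>k. if N \<le> k then expw R k else 0) = (\<lambda>k. expw R k - (if k < N then expw R k else 0))"
    by auto
  have f: "(\<Sum>k. if k < N then expw R k else 0) = (\<Sum>k<N. expw R k)"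
    by (subst suminf_finite[of "{..<N}"]) auto
  have s2: "summable (\<lambda>k. if k < N then expw R k else 0)"
    by (rule summable_finite[of "{..<N}"]) auto
  show ?thesis unfolding expw_tail_def e
    using suminf_diff[OF expw_summable1[of R] s2] f expw_suminf[of R 1] by simp
qed

lemma expw_tail_0: "expw_tail R 0 = exp R"
  by (simp add: expw_tail_eq)

lemma expw_tail_lim: "expw_tail R \<longlonglongrightarrow> 0"
proof -
  have "(\<lambda>N. exp R - (\<Sum>k<N. expw R k)) \<longlonglongrightarrow> exp R - exp R"
    using summable_LIMSEQ[OF expw_summable1[of R]] expw_suminf[of R 1]
    by (intro tendsto_diff) auto
  then show ?thesis unfolding expw_tail_eq[abs_def] by simp
qed

lemma expw_tail_summable: "R \<ge> 0 \<Longrightarrow> summable (\<lambda>k. if N \<le> k then expw R k else 0)"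
  by (rule summable_comparison_test[OF _ expw_summable1[of R]]) (auto simp: expw_nonneg)

lemma expw_tail_nonneg: "R \<ge> 0 \<Longrightarrow> expw_tail R N \<ge> 0"
  unfolding expw_tail_def
  by (rule suminf_nonneg[OF expw_tail_summable]) (auto simp: expw_nonneg)

lemma expw_tail_eventually_small:
  assumes "e > 0"
  obtains N where "expw_tail R N < e"
proof -
  obtain N where "\<forall>n\<ge>N. norm (expw_tail R n - 0) < e"
    using LIMSEQ_D[OF expw_tail_lim[of R] assms] by blast
  then have "expw_tail R N < e" by auto
  then show ?thesis by (rule that)
qed

lemma lapmaj_pow_bound:
  assumes "\<And>y. 0 \<le> g y" "\<And>y. g y \<le> B"
  shows "0 \<le> (lapmaj^^k) g x \<and> (lapmaj^^k) g x \<le> 4^k * B"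
proof (induction k arbitrary: x)
  case 0 then show ?case using assms by simp
next
  case (Suc k)
  have a: "0 \<le> (lapmaj^^k) g y \<and> (lapmaj^^k) g y \<le> 4^k * B" for y using Suc by blast
  have e: "4^Suc k * B = 4 * (4^k * B)" by simp
  show ?case
    using a[of "x+1"] a[of "x-1"] a[of x] unfolding lapmaj_pow_Suc e by linarith
qed

lemma lapmaj_pow_add:
  "(lapmaj^^k) (\<lambda>y. g y + h y) x = (lapmaj^^k) g x + (lapmaj^^k) h x"
  by (induction k arbitrary: x) (simp_all add: lapmaj_def algebra_simps)

lemma lapmaj_pow_local:
  assumes "\<And>z. \<bar>z - x\<bar> \<le> int k \<Longrightarrow> g z = 0"
  shows "(lapmaj^^k) g x = 0"
  using assms
proof (induction k arbitrary: x)
  case 0 then show ?case by simp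
next
  case (Suc k)
  have "(lapmaj^^k) g (x+1) = 0" by (rule Suc.IH) (rule Suc.prems, auto)
  moreover have "(lapmaj^^k) g (x-1) = 0" by (rule Suc.IH) (rule Suc.prems, auto)
  moreover have "(lapmaj^^k) g x = 0" by (rule Suc.IH) (rule Suc.prems, auto)
  ultimately show ?case unfolding lapmaj_pow_Suc by linarith
qed

lemma dlap_pow_le_lapmaj_pow:
  "norm ((dlap^^k) f x) \<le> (lapmaj^^k) (\<lambda>y. norm (f y)) x"
proof (induction k arbitrary: x)
  case 0 then show ?case by simp
next
  case (Suc k)
  let ?D = "(dlap^^k) f"
  have "norm ((dlap^^Suc k) f x) \<le> norm (?D (x+1) + ?D (x-1)) + norm (2 * ?D x)"
    unfolding dlap_pow_Suc by (rule norm_triangle_ineq4)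
  also have "\<dots> \<le> norm (?D (x+1)) + norm (?D (x-1)) + 2 * norm (?D x)"
    using norm_triangle_ineq[of "?D (x+1)" "?D (x-1)"] by (simp add: norm_mult)
  also have "\<dots> \<le> (lapmaj^^Suc k) (\<lambda>y. norm (f y)) x"
    unfolding lapmaj_pow_Suc using Suc[of "x+1"] Suc[of "x-1"] Suc[of x] by linarith
  finally show ?case .
qed

lemma dlap_pow_add:
  "(dlap^^k) (\<lambda>y. f y + g y) x = (dlap^^k) f x + (dlap^^k) g x"
  by (induction k arbitrary: x) (simp_all add: dlap_def algebra_simps)

lemma dlap_pow_scale:
  "(dlap^^k) (\<lambda>y. c * f y) x = c * (dlap^^k) f x"
  by (induction k arbitrary: x) (simp_all add: dlap_def algebra_simps)

lemma dlap_pow_const_local: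
  assumes "\<And>z. \<bar>z - x\<bar> \<le> int (Suc k) \<Longrightarrow> f z = c"
  shows "(dlap^^Suc k) f x = 0"
  using assms
proof (induction k arbitrary: x)
  case 0
  have "f (x+1) = c" "f (x-1) = c" "f x = c" by (rule 0; auto)+
  then show ?case by (simp add: dlap_def)
next
  case (Suc k)
  have "(dlap^^Suc k) f (x+1) = 0" by (rule Suc.IH) (rule Suc.prems, auto)
  moreover have "(dlap^^Suc k) f (x-1) = 0" by (rule Suc.IH) (rule Suc.prems, auto)
  moreover have "(dlap^^Suc k) f x = 0" by (rule Suc.IH) (rule Suc.prems, auto)
  ultimately show ?case by (simp only: dlap_pow_Suc) simp
qed


lemma sum_le_infsum_nonneg:
  fixes f :: "'a \<Rightarrow> real"
  assumes "f summable_on A" "finite F" "F \<subseteq> A" "\<And>x. x \<in> A \<Longrightarrow> 0 \<le> f x"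
  shows "sum f F \<le> infsum f A"
proof -
  have "infsum f F \<le> infsum f A"
    by (rule infsum_mono_neutral) (use assms in auto)
  then show ?thesis using assms(2) by simp
qed

lemma single_le_infsum_nonneg:
  fixes f :: "'a \<Rightarrow> real"
  assumes "f summable_on A" "x \<in> A" "\<And>x. x \<in> A \<Longrightarrow> 0 \<le> f x"
  shows "f x \<le> infsum f A"
  using sum_le_infsum_nonneg[OF assms(1) _ _ assms(3), of "{x}"] assms(2) by simp

lemma infsum_le_of_finite_sums_nonneg:
  fixes f :: "'a \<Rightarrow> real"
  assumes "\<And>x. x \<in> A \<Longrightarrow> 0 \<le> f x"
    and "\<And>F. finite F \<Longrightarrow> F \<subseteq> A \<Longrightarrow> sum f F \<le> B"
  shows "f summable_on A \<and> infsum f A \<le> B"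
proof -
  have s: "f summable_on A"
    by (rule nonneg_bdd_above_summable_on) (use assms in \<open>auto simp: bdd_above_def\<close>)
  then show ?thesis using infsum_le_finite_sums[OF s] assms(2) by blast
qed

lemma suminf_Cauchy_Schwarz:
  fixes v a :: "nat \<Rightarrow> real"
  assumes v0: "\<And>k. 0 \<le> v k" and sv: "summable v" and sva: "summable (\<lambda>k. v k * (a k)\<^sup>2)"
  shows "summable (\<lambda>k. v k * a k) \<and> (\<Sum>k. v k * a k)\<^sup>2 \<le> (\<Sum>k. v k) * (\<Sum>k. v k * (a k)\<^sup>2)"
proof -
  have s1: "summable (\<lambda>k. v k * a k)"
  proof (rule summable_comparison_test[where g="\<lambda>k. (v k + v k * (a k)\<^sup>2) / 2"])
    have "norm (v n * a n) \<le> (v n + v n * (a n)\<^sup>2) / 2" for n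
    proof -
      have "0 \<le> (\<bar>a n\<bar> - 1)\<^sup>2" by simp
      then have "2 * \<bar>a n\<bar> \<le> 1 + (a n)\<^sup>2" by (simp add: power2_diff)
      then have "v n * (2 * \<bar>a n\<bar>) \<le> v n * (1 + (a n)\<^sup>2)" using v0[of n] by (rule mult_left_mono)
      then show ?thesis using v0[of n] by (simp add: abs_mult algebra_simps)
    qed
    then show "\<exists>N. \<forall>n\<ge>N. norm (v n * a n) \<le> (v n + v n * (a n)\<^sup>2) / 2" by blast
    show "summable (\<lambda>k. (v k + v k * (a k)\<^sup>2) / 2)"
      using summable_add[OF sv sva] by (rule summable_divide)
  qed
  define S where "S = (\<Sum>k. v k)"
  define P where "P = (\<Sum>k. v k * a k)"
  define Q where "Q = (\<Sum>k. v k * (a k)\<^sup>2)"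
  have quadratic_nonneg: "0 \<le> Q - 2 * t * P + t\<^sup>2 * S" for t
  proof -
    have e: "(\<lambda>k. v k * (a k - t)\<^sup>2) = (\<lambda>k. (v k * (a k)\<^sup>2 - (2*t) * (v k * a k)) + t\<^sup>2 * v k)"
      by (auto simp: power2_eq_square algebra_simps)
    have "(\<Sum>k. v k * (a k - t)\<^sup>2) = Q - 2 * t * P + t\<^sup>2 * S"
      unfolding e S_def P_def Q_def using sva s1 sv
      by (subst suminf_add[symmetric])
         (auto intro!: summable_diff summable_mult simp: suminf_diff[symmetric] suminf_mult)
    moreover have "0 \<le> (\<Sum>k. v k * (a k - t)\<^sup>2)"
    proof (rule suminf_nonneg)
      show "summable (\<lambda>k. v k * (a k - t)\<^sup>2)" unfolding e
        using sva s1 sv by (auto intro!: summable_add summable_diff summable_mult)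
    qed (use v0 in auto)
    ultimately show ?thesis by simp
  qed
  have "P\<^sup>2 \<le> S * Q"
  proof (cases "S > 0")
    case True
    have "0 \<le> Q - 2 * (P/S) * P + (P/S)\<^sup>2 * S" by (rule quadratic_nonneg)
    also have "\<dots> = Q - P\<^sup>2 / S" using True by (simp add: power2_eq_square field_simps)
    finally show ?thesis using True by (simp add: field_simps)
  next
    case False
    have "S \<ge> 0" unfolding S_def using sv v0 by (rule suminf_nonneg)
    with False have "S = 0" by simp
    then have "\<forall>k. v k = 0" unfolding S_def using suminf_eq_zero_iff[OF sv] v0 by auto
    then show ?thesis unfolding P_def by (simp add: \<open>S = 0\<close>)
  qed
  then show ?thesis using s1 unfolding S_def P_def Q_def by simp
qed

lemma propmaj_summable:
  assumes "R \<ge> 0" "\<And>y. 0 \<le> g y" "\<And>y. g y \<le> B"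
  shows "summable (\<lambda>k. expw R k * (lapmaj^^k) g x)"
proof (rule summable_comparison_test[where g="\<lambda>k. (expw R k * 4^k) * B"])
  have "norm (expw R n * (lapmaj ^^ n) g x) \<le> expw R n * 4 ^ n * B" for n
    using lapmaj_pow_bound[of g B, OF assms(2,3), of n x] expw_nonneg[OF assms(1), of n]
    by (simp add: abs_mult mult.assoc mult_left_mono)
  then show "\<exists>N. \<forall>n\<ge>N. norm (expw R n * (lapmaj ^^ n) g x) \<le> expw R n * 4 ^ n * B" by blast
  show "summable (\<lambda>k. expw R k * 4 ^ k * B)" using expw_summable by (rule summable_mult2)
qed

lemma propmaj_nonneg:
  assumes "R \<ge> 0" "\<And>y. 0 \<le> g y" "\<And>y. g y \<le> B"
  shows "0 \<le> propmaj R g x"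
  unfolding propmaj_def
  using propmaj_summable[OF assms] lapmaj_pow_bound[of g B, OF assms(2,3)] expw_nonneg[OF assms(1)]
  by (auto intro!: suminf_nonneg)

lemma propmaj_add:
  assumes "R \<ge> 0" "\<And>y. 0 \<le> g y" "\<And>y. g y \<le> B" "\<And>y. 0 \<le> h y" "\<And>y. h y \<le> B'"
  shows "propmaj R (\<lambda>y. g y + h y) x = propmaj R g x + propmaj R h x"
  unfolding propmaj_def lapmaj_pow_add
  using suminf_add[OF propmaj_summable[OF assms(1-3)] propmaj_summable[OF assms(1,4,5)]]
  by (simp add: algebra_simps)

lemma shift_summable:
  fixes g :: "int \<Rightarrow> real"
  assumes "g summable_on UNIV"
  shows "(\<lambda>x. g (x + c)) summable_on UNIV \<and> infsum (\<lambda>x. g (x + c)) UNIV = infsum g UNIV"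
proof -
  have b: "bij_betw (\<lambda>x. x + c) UNIV UNIV"
    by (rule bij_betwI[where g="\<lambda>x. x - c"]) auto
  show ?thesis
    using summable_on_reindex_bij_betw[OF b, of g] infsum_reindex_bij_betw[OF b, of g] assms by simp
qed

lemma lapmaj_l2:
  fixes g :: "int \<Rightarrow> real"
  assumes "(\<lambda>x. (g x)\<^sup>2) summable_on UNIV"
  shows "(\<lambda>x. (lapmaj g x)\<^sup>2) summable_on UNIV \<and>
         infsum (\<lambda>x. (lapmaj g x)\<^sup>2) UNIV \<le> 16 * infsum (\<lambda>x. (g x)\<^sup>2) UNIV"
proof -
  let ?G = "infsum (\<lambda>x. (g x)\<^sup>2) UNIV"
  have s1: "(\<lambda>x. (g (x + 1))\<^sup>2) summable_on UNIV" "infsum (\<lambda>x. (g (x + 1))\<^sup>2) UNIV = ?G"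
    using shift_summable[OF assms, of 1] by auto
  have s2: "(\<lambda>x. (g (x + -1))\<^sup>2) summable_on UNIV" "infsum (\<lambda>x. (g (x + -1))\<^sup>2) UNIV = ?G"
    using shift_summable[OF assms, of "-1"] by auto
  have pw: "(lapmaj g x)\<^sup>2 \<le> 4 * (g (x+1))\<^sup>2 + 4 * (g (x + -1))\<^sup>2 + 8 * (g x)\<^sup>2" for x
  proof -
    have "(a + b + 2*c)\<^sup>2 \<le> 4*a\<^sup>2 + 4*b\<^sup>2 + 8*c\<^sup>2" for a b c :: real
    proof -
      have "0 \<le> (a-b)\<^sup>2 + 2*(a-c)\<^sup>2 + 2*(b-c)\<^sup>2" by simp
      then show ?thesis by (simp add: power2_eq_square algebra_simps)
    qed
    then show ?thesis by (simp add: lapmaj_def)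
  qed
  have sR: "(\<lambda>x. 4 * (g (x+1))\<^sup>2 + 4 * (g (x + -1))\<^sup>2 + 8 * (g x)\<^sup>2) summable_on UNIV"
    using s1(1) s2(1) assms by (intro summable_on_add summable_on_cmult_right) auto
  have sA: "(\<lambda>x. (lapmaj g x)\<^sup>2) summable_on UNIV"
    by (rule summable_on_comparison_test[OF sR]) (use pw in auto)
  have "infsum (\<lambda>x. (lapmaj g x)\<^sup>2) UNIV
      \<le> infsum (\<lambda>x. 4 * (g (x+1))\<^sup>2 + 4 * (g (x + -1))\<^sup>2 + 8 * (g x)\<^sup>2) UNIV"
    by (rule infsum_mono[OF sA sR]) (use pw in auto)
  also have "\<dots> = 16 * ?G"
    using s1 s2 assms
    by (simp add: infsum_add summable_on_add summable_on_cmult_right infsum_cmult_right)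
  finally show ?thesis using sA by simp
qed

lemma lapmaj_pow_l2:
  fixes g :: "int \<Rightarrow> real"
  assumes "(\<lambda>x. (g x)\<^sup>2) summable_on UNIV"
  shows "(\<lambda>x. ((lapmaj^^k) g x)\<^sup>2) summable_on UNIV \<and>
         infsum (\<lambda>x. ((lapmaj^^k) g x)\<^sup>2) UNIV \<le> 16^k * infsum (\<lambda>x. (g x)\<^sup>2) UNIV"
proof (induction k)
  case 0 then show ?case using assms by simp
next
  case (Suc k)
  then show ?case using lapmaj_l2[of "(lapmaj^^k) g"] by (auto simp: mult.assoc)
qed

lemma l2_pointwise:
  fixes g :: "int \<Rightarrow> real"
  assumes "(\<lambda>x. (g x)\<^sup>2) summable_on UNIV"
  shows "(g x)\<^sup>2 \<le> infsum (\<lambda>x. (g x)\<^sup>2) UNIV"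
  using single_le_infsum_nonneg[OF assms] by simp

text \<open>Pointwise far-field bound: if g vanishes within distance N of x, only the terms k >= N
  of the series contribute, and Cauchy-Schwarz with the tail weights gives
  (exp(R A) g x)^2 <= tail(N) * sum_k expw R k ((A^k g) x)^2.\<close>

lemma propmaj_sq_far:
  fixes g :: "int \<Rightarrow> real"
  assumes R: "R \<ge> 0" and g0: "\<And>y. 0 \<le> g y" and gB: "\<And>y. g y \<le> B"
    and far: "\<And>z. \<bar>z - x\<bar> < int N \<Longrightarrow> g z = 0"
  shows "summable (\<lambda>k. expw R k * ((lapmaj^^k) g x)\<^sup>2)"
    and "(propmaj R g x)\<^sup>2 \<le> expw_tail R N * (\<Sum>k. expw R k * ((lapmaj^^k) g x)\<^sup>2)"
proof -
  define a where "a k = (lapmaj^^k) g x" for k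
  have a0: "0 \<le> a k" "a k \<le> 4^k * B" for k
    using lapmaj_pow_bound[of g B, OF g0 gB] unfolding a_def by auto
  define v where "v k = (if N \<le> k then expw R k else 0)" for k
  have v0: "0 \<le> v k" for k using expw_nonneg[OF R] by (simp add: v_def)
  have sv: "summable v" unfolding v_def by (rule expw_tail_summable[OF R])
  show swa: "summable (\<lambda>k. expw R k * ((lapmaj^^k) g x)\<^sup>2)"
  proof (rule summable_comparison_test[where g="\<lambda>k. (expw R k * 16^k) * B\<^sup>2"])
    have "norm (expw R n * (a n)\<^sup>2) \<le> expw R n * 16 ^ n * B\<^sup>2" for n
    proof -
      have "(a n)\<^sup>2 \<le> (4^n * B)\<^sup>2" using a0[of n] by (intro power_mono) auto
      also have "\<dots> = 16^n * B\<^sup>2"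
        by (simp add: power2_eq_square power_mult_distrib[symmetric])
      finally show ?thesis
        using expw_nonneg[OF R, of n] by (simp add: abs_mult mult.assoc mult_left_mono)
    qed
    then show "\<exists>N. \<forall>n\<ge>N. norm (expw R n * ((lapmaj^^n) g x)\<^sup>2) \<le> expw R n * 16 ^ n * B\<^sup>2"
      unfolding a_def by blast
    show "summable (\<lambda>k. expw R k * 16 ^ k * B\<^sup>2)" using expw_summable by (rule summable_mult2)
  qed
  then have swa': "summable (\<lambda>k. expw R k * (a k)\<^sup>2)" unfolding a_def .
  have sva: "summable (\<lambda>k. v k * (a k)\<^sup>2)"
    by (rule summable_comparison_test[OF _ swa']) (auto simp: v_def expw_nonneg[OF R])
  have "a k = 0" if "k < N" for k
    unfolding a_def by (rule lapmaj_pow_local) (use far that in auto)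
  then have "propmaj R g x = (\<Sum>k. v k * a k)"
    unfolding propmaj_def v_def a_def by (intro suminf_cong) auto
  then have "(propmaj R g x)\<^sup>2 \<le> (\<Sum>k. v k) * (\<Sum>k. v k * (a k)\<^sup>2)"
    using suminf_Cauchy_Schwarz[OF v0 sv sva] by simp
  also have "\<dots> \<le> (\<Sum>k. v k) * (\<Sum>k. expw R k * (a k)\<^sup>2)"
    by (intro mult_left_mono suminf_le sva swa' suminf_nonneg sv v0)
       (auto simp: v_def expw_nonneg[OF R])
  finally show "(propmaj R g x)\<^sup>2 \<le> expw_tail R N * (\<Sum>k. expw R k * ((lapmaj^^k) g x)\<^sup>2)"
    unfolding expw_tail_def v_def a_def by simp
qed

lemma propmaj_l2_far:
  fixes g :: "int \<Rightarrow> real"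
  assumes R: "R \<ge> 0" and g0: "\<And>y. 0 \<le> g y" and gs: "(\<lambda>x. (g x)\<^sup>2) summable_on UNIV"
    and far: "\<And>x z. x \<in> X \<Longrightarrow> \<bar>z - x\<bar> < int N \<Longrightarrow> g z = 0"
  shows "(\<lambda>x. (propmaj R g x)\<^sup>2) summable_on X \<and>
         infsum (\<lambda>x. (propmaj R g x)\<^sup>2) X \<le> expw_tail R N * exp (16*R) * infsum (\<lambda>x. (g x)\<^sup>2) UNIV"
proof -
  define G where "G = infsum (\<lambda>x. (g x)\<^sup>2) UNIV"
  have gB: "g y \<le> sqrt G" for y
    unfolding G_def using l2_pointwise[OF gs, of y] g0[of y] real_le_rsqrt by blast
  define a where "a x k = (lapmaj^^k) g x" for x k
  have sum_k: "summable (\<lambda>k. expw R k * (a x k)\<^sup>2)"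
    and pt: "(propmaj R g x)\<^sup>2 \<le> expw_tail R N * (\<Sum>k. expw R k * (a x k)\<^sup>2)"
    if "x \<in> X" for x
    using propmaj_sq_far[OF R g0 gB, of x N] far[OF that] unfolding a_def by auto
  have "sum (\<lambda>x. (propmaj R g x)\<^sup>2) F \<le> expw_tail R N * exp (16*R) * G"
    if "finite F" "F \<subseteq> X" for F
  proof -
    have "sum (\<lambda>x. (propmaj R g x)\<^sup>2) F \<le> sum (\<lambda>x. expw_tail R N * (\<Sum>k. expw R k * (a x k)\<^sup>2)) F"
      using pt that by (intro sum_mono) auto
    also have "\<dots> = expw_tail R N * (\<Sum>x\<in>F. \<Sum>k. expw R k * (a x k)\<^sup>2)"
      by (simp add: sum_distrib_left)
    also have "\<dots> = expw_tail R N * (\<Sum>k. \<Sum>x\<in>F. expw R k * (a x k)\<^sup>2)"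
    proof -
      have "\<And>x. x \<in> F \<Longrightarrow> summable (\<lambda>k. expw R k * (a x k)\<^sup>2)" using sum_k that by blast
      then show ?thesis by (simp add: suminf_sum)
    qed
    also have "\<dots> \<le> expw_tail R N * (\<Sum>k. expw R k * 16^k * G)"
    proof (intro mult_left_mono suminf_le expw_tail_nonneg[OF R])
      fix k
      have ak: "(\<lambda>x. (a x k)\<^sup>2) summable_on UNIV" "infsum (\<lambda>x. (a x k)\<^sup>2) UNIV \<le> 16^k * G"
        using lapmaj_pow_l2[OF gs, of k] unfolding a_def G_def by auto
      have "(\<Sum>x\<in>F. (a x k)\<^sup>2) \<le> infsum (\<lambda>x. (a x k)\<^sup>2) UNIV"
        by (rule sum_le_infsum_nonneg[OF ak(1) that(1)]) auto
      then show "(\<Sum>x\<in>F. expw R k * (a x k)\<^sup>2) \<le> expw R k * 16 ^ k * G"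
        using ak(2) expw_nonneg[OF R, of k]
        by (simp add: sum_distrib_left[symmetric] mult.assoc mult_left_mono)
      show "summable (\<lambda>k. \<Sum>x\<in>F. expw R k * (a x k)\<^sup>2)"
        using sum_k that by (intro summable_sum) auto
      show "summable (\<lambda>k. expw R k * 16 ^ k * G)" using expw_summable by (rule summable_mult2)
    qed
    also have "\<dots> = expw_tail R N * exp (16*R) * G"
      using suminf_mult2[OF expw_summable[of R 16], of G] expw_suminf[of R 16]
      by (simp add: mult.commute mult.left_commute)
    finally show ?thesis .
  qed
  then show ?thesis unfolding G_def[symmetric]
    by (intro infsum_le_of_finite_sums_nonneg) auto
qed

lemma dS_term_norm:
  "norm ((\<i> * complex_of_real r)^k / of_nat (fact k) * z) = expw \<bar>r\<bar> k * norm z"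
  by (simp add: expw_def norm_mult norm_power norm_divide)

lemma dS_norm_summable:
  assumes "\<And>y. norm (f y) \<le> B" "\<bar>r\<bar> \<le> R"
  shows "summable (\<lambda>k. norm ((\<i> * complex_of_real r)^k / of_nat (fact k) * (dlap^^k) f x))"
proof (rule summable_comparison_test[OF _ propmaj_summable[of R "\<lambda>y. norm (f y)" B x]])
  have "expw \<bar>r\<bar> n * norm ((dlap ^^ n) f x) \<le> expw R n * (lapmaj ^^ n) (\<lambda>y. norm (f y)) x" for n
    by (intro mult_mono expw_mono dlap_pow_le_lapmaj_pow expw_nonneg) (use assms in auto)
  then show "\<exists>N. \<forall>n\<ge>N. norm (norm ((\<i> * complex_of_real r) ^ n / of_nat (fact n) * (dlap ^^ n) f x))
           \<le> expw R n * (lapmaj ^^ n) (\<lambda>y. norm (f y)) x"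
    unfolding real_norm_def abs_norm_cancel dS_term_norm by (simp add: abs_mult expw_nonneg)
qed (use assms in \<open>auto intro: order_trans[OF abs_ge_zero]\<close>)

lemma dS_summable:
  assumes "\<And>y. norm (f y) \<le> B"
  shows "summable (\<lambda>k. (\<i> * complex_of_real r)^k / of_nat (fact k) * (dlap^^k) f x)"
  using dS_norm_summable[of f B r "\<bar>r\<bar>" x] assms summable_norm_cancel by auto

lemma dS_le_propmaj:
  assumes "\<And>y. norm (f y) \<le> B" "\<bar>r\<bar> \<le> R"
  shows "norm (dS r f x) \<le> propmaj R (\<lambda>y. norm (f y)) x"
proof -
  have R: "R \<ge> 0" using assms(2) by linarith
  have "norm (dS r f x) \<le> (\<Sum>k. norm ((\<i> * complex_of_real r)^k / of_nat (fact k) * (dlap^^k) f x))"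
    unfolding dS_def by (rule summable_norm[OF dS_norm_summable[of f B r R x]]) (use assms in auto)
  also have "\<dots> \<le> propmaj R (\<lambda>y. norm (f y)) x"
    unfolding propmaj_def
  proof (rule suminf_le[OF _ dS_norm_summable[of f B r R x]
                           propmaj_summable[of R "\<lambda>y. norm (f y)" B x]])
    fix n
    have "expw \<bar>r\<bar> n * norm ((dlap ^^ n) f x) \<le> expw R n * (lapmaj ^^ n) (\<lambda>y. norm (f y)) x"
      by (intro mult_mono expw_mono dlap_pow_le_lapmaj_pow expw_nonneg) (use assms R in auto)
    then show "norm ((\<i> * complex_of_real r) ^ n / of_nat (fact n) * (dlap ^^ n) f x)
           \<le> expw R n * (lapmaj ^^ n) (\<lambda>y. norm (f y)) x"
      by (simp only: dS_term_norm)
  qed (use assms R in auto)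
  finally show ?thesis .
qed

lemma dS_add:
  assumes "\<And>y. norm (f y) \<le> B" "\<And>y. norm (g y) \<le> B'"
  shows "dS r (\<lambda>y. f y + g y) x = dS r f x + dS r g x"
  unfolding dS_def dlap_pow_add distrib_left
  using suminf_add[OF dS_summable[of f B r x] dS_summable[of g B' r x]] assms
  by simp

lemma dS_scale:
  assumes "\<And>y. norm (f y) \<le> B"
  shows "dS r (\<lambda>y. c * f y) x = c * dS r f x"
  unfolding dS_def dlap_pow_scale
  using suminf_mult[OF dS_summable[of f B r x], of c] assms
  by (simp add: algebra_simps)

lemma dS_measurable:
  assumes "\<And>y. norm (f y) \<le> B"
  shows "(\<lambda>r. dS r f x) \<in> borel_measurable borel"
proof (rule borel_measurable_LIMSEQ_metric)
  fix n
  show "(\<lambda>r. \<Sum>k<n. (\<i> * complex_of_real r)^k / of_nat (fact k) * (dlap^^k) f x) \<in> borel_measurable borel"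
    by measurable
next
  fix r :: real
  show "(\<lambda>n. \<Sum>k<n. (\<i> * complex_of_real r)^k / of_nat (fact k) * (dlap^^k) f x) \<longlonglongrightarrow> dS r f x"
    unfolding dS_def by (rule summable_LIMSEQ[OF dS_summable[of f B]]) (rule assms)
qed

text \<open>For the indicator of [-N, N], S_r f 0 stays close to 1: the terms 1 <= k <= N of the series
  vanish (the Laplacian kills locally constant functions) and the remaining terms are bounded
  by the tail of exp(4 R0).  This yields a test function with positive functional.\<close>

lemma dS_indicator_near_one:
  fixes N :: nat
  defines "f \<equiv> (\<lambda>x::int. if \<bar>x\<bar> \<le> int N then 1 else 0 :: complex)"
  assumes small_tail: "expw_tail (4*R0) (Suc N) < 1/2" and r: "\<bar>r\<bar> \<le> R0"
  shows "norm (dS r f 0) \<ge> 1/2"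
proof -
  have R0: "R0 \<ge> 0" using r by linarith
  define t where "t k = (\<i> * complex_of_real r)^k / of_nat (fact k) * (dlap^^k) f 0" for k
  have tn: "norm (t k) \<le> expw (4*R0) k" for k
  proof -
    have "norm ((dlap^^k) f 0) \<le> (lapmaj^^k) (\<lambda>y. norm (f y)) 0" by (rule dlap_pow_le_lapmaj_pow)
    also have "\<dots> \<le> 4^k * 1" using lapmaj_pow_bound[of "\<lambda>y. norm (f y)" 1 k 0] by (auto simp: f_def)
    finally have "expw \<bar>r\<bar> k * norm ((dlap^^k) f 0) \<le> expw R0 k * (4^k * 1)"
      by (intro mult_mono expw_mono) (use r R0 expw_nonneg in auto)
    then show ?thesis unfolding t_def dS_term_norm by (simp add: expw_times_pow)
  qed
  define u where "u k = (if N < k then t k else 0)" for k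
  have tk: "t k = (if k = 0 then 1 else 0) + u k" for k
  proof (cases "k = 0 \<or> N < k")
    case True then show ?thesis
      by (cases "k = 0") (simp_all add: t_def u_def f_def)
  next
    case False
    then obtain k' where "k = Suc k'" using not0_implies_Suc by blast
    with False have k': "k = Suc k'" "k' < N" by auto
    have "(dlap^^Suc k') f 0 = 0"
      by (rule dlap_pow_const_local[where c=1]) (use k' in \<open>auto simp: f_def\<close>)
    then show ?thesis using False k' by (simp add: t_def u_def)
  qed
  have su_norm: "summable (\<lambda>k. norm (u k))"
    by (rule summable_comparison_test[OF _ expw_tail_summable[of "4*R0" "Suc N"]])
       (use tn R0 in \<open>auto simp: u_def\<close>)
  have su: "summable u" using su_norm summable_norm_cancel by blast
  have "(\<lambda>k. t k) sums (1 + suminf u)"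
    unfolding tk using sums_add[OF sums_single[of 0 "\<lambda>_. 1::complex"] summable_sums[OF su]] by simp
  then have e: "dS r f 0 = 1 + suminf u" unfolding dS_def t_def by (simp add: sums_iff)
  have "norm (suminf u) \<le> (\<Sum>k. norm (u k))" by (rule summable_norm[OF su_norm])
  also have "\<dots> \<le> expw_tail (4*R0) (Suc N)" unfolding expw_tail_def
    by (rule suminf_le[OF _ su_norm expw_tail_summable]) (use tn R0 in \<open>auto simp: u_def\<close>)
  finally have "norm (suminf u) < 1/2" using small_tail by simp
  moreover have "norm (1::complex) - norm (suminf u) \<le> norm (1 + suminf u)" by (rule norm_diff_ineq)
  ultimately show ?thesis unfolding e by simp
qed

lemma in_l2_bound:
  assumes "in_l2 f"
  shows "norm (f y) \<le> sqrt (l2_norm_sq f)"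
proof -
  have "(norm (f y))\<^sup>2 \<le> l2_norm_sq f"
    using l2_pointwise[of "\<lambda>x. norm (f x)" y] assms unfolding in_l2_def l2_norm_sq_def by simp
  then show ?thesis using real_le_rsqrt by blast
qed

lemma l2_norm_sq_nonneg: "l2_norm_sq f \<ge> 0"
  unfolding l2_norm_sq_def by (rule infsum_nonneg) simp

lemma l2_scale:
  assumes "in_l2 f"
  shows "in_l2 (\<lambda>x. c * f x) \<and> l2_norm_sq (\<lambda>x. c * f x) = (norm c)\<^sup>2 * l2_norm_sq f"
proof -
  have e: "(\<lambda>x. (norm (c * f x))\<^sup>2) = (\<lambda>x. (norm c)\<^sup>2 * (norm (f x))\<^sup>2)"
    by (simp add: norm_mult power_mult_distrib)
  show ?thesis using assms unfolding in_l2_def l2_norm_sq_def e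
    by (simp add: summable_on_cmult_right infsum_cmult_right)
qed

definition mass :: "(int \<Rightarrow> complex) \<Rightarrow> int set \<Rightarrow> real" where
  "mass f A = (\<Sum>\<^sub>\<infinity>x\<in>A. (norm (f x))\<^sup>2)"

definition cutoff :: "int set \<Rightarrow> (int \<Rightarrow> complex) \<Rightarrow> int \<Rightarrow> complex" where
  "cutoff A f x = (if x \<in> A then f x else 0)"

lemma mass_summable: "in_l2 f \<Longrightarrow> (\<lambda>x. (norm (f x))\<^sup>2) summable_on A"
  unfolding in_l2_def by (rule summable_on_subset) auto

lemma mass_nonneg: "mass f A \<ge> 0"
  unfolding mass_def by (rule infsum_nonneg) auto

lemma mass_mono: "in_l2 f \<Longrightarrow> A \<subseteq> B \<Longrightarrow> mass f A \<le> mass f B"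
  unfolding mass_def by (rule infsum_mono_neutral) (auto intro: mass_summable)

lemma mass_UNIV: "mass f UNIV = l2_norm_sq f"
  by (simp add: mass_def l2_norm_sq_def)

lemma mass_le_l2: "in_l2 f \<Longrightarrow> mass f A \<le> l2_norm_sq f"
  using mass_mono[of f A UNIV] mass_UNIV by simp

lemma mass_union: "in_l2 f \<Longrightarrow> A \<inter> B = {} \<Longrightarrow> mass f (A \<union> B) = mass f A + mass f B"
  unfolding mass_def by (rule infsum_Un_disjoint) (auto intro: mass_summable)

lemma mass_compl: "in_l2 f \<Longrightarrow> mass f (-A) = l2_norm_sq f - mass f A"
  using mass_union[of f A "-A"] mass_UNIV[of f] by (simp add: Un_commute)

lemma cutoff_l2:
  assumes "in_l2 f"
  shows "in_l2 (cutoff A f)" and "l2_norm_sq (cutoff A f) = mass f A"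
proof -
  have "(\<lambda>x. (norm (cutoff A f x))\<^sup>2) summable_on UNIV \<longleftrightarrow> (\<lambda>x. (norm (f x))\<^sup>2) summable_on A"
    by (rule summable_on_cong_neutral) (auto simp: cutoff_def)
  then show "in_l2 (cutoff A f)" using mass_summable[OF assms] unfolding in_l2_def by simp
  have "infsum (\<lambda>x. (norm (cutoff A f x))\<^sup>2) UNIV = infsum (\<lambda>x. (norm (f x))\<^sup>2) A"
    by (rule infsum_cong_neutral) (auto simp: cutoff_def)
  then show "l2_norm_sq (cutoff A f) = mass f A" unfolding l2_norm_sq_def mass_def .
qed

section \<open>The quartic functional for a measure with bounded support\<close>

locale bounded_support_measure =
  fixes \<mu> :: "real measure" and R0 :: real
  assumes sets_mu: "sets \<mu> = sets borel"
    and finite_mu: "emeasure \<mu> UNIV < \<infinity>"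
    and R0: "R0 \<ge> 0"
    and supp: "AE r in \<mu>. \<bar>r\<bar> \<le> R0"
begin

lemma space_mu: "space \<mu> = UNIV"
  using sets_eq_imp_space_eq[OF sets_mu] by simp

sublocale finite_measure \<mu>
  by (rule finite_measureI) (use finite_mu space_mu in auto)

definition Smaj where "Smaj f x = propmaj R0 (\<lambda>y. norm (f y)) x"
definition Cmaj where "Cmaj = exp R0 * exp (16*R0)"
definition mtot where "mtot = measure \<mu> UNIV"
definition qdens where "qdens f x = (\<integral>r. (norm (dS r f x))^4 \<partial>\<mu>)"
definition quart where "quart f = (\<Sum>\<^sub>\<infinity>x. qdens f x)"

lemma Cmaj_pos: "Cmaj > 0" by (simp add: Cmaj_def)
lemma mtot_nonneg: "mtot \<ge> 0" by (simp add: mtot_def)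

lemma dS_borel:
  assumes "in_l2 f"
  shows "(\<lambda>r. dS r f x) \<in> borel_measurable \<mu>"
  using dS_measurable[of f "sqrt (l2_norm_sq f)" x] in_l2_bound[OF assms]
    measurable_cong_sets[OF sets_mu refl]
  by auto

lemma Smaj_nonneg: "in_l2 f \<Longrightarrow> 0 \<le> Smaj f x"
  unfolding Smaj_def using propmaj_nonneg[of R0 "\<lambda>y. norm (f y)" "sqrt (l2_norm_sq f)" x] R0 in_l2_bound
  by auto

lemma Smaj_l2:
  assumes "in_l2 f"
  shows "(\<lambda>x. (Smaj f x)\<^sup>2) summable_on UNIV \<and> (\<Sum>\<^sub>\<infinity>x. (Smaj f x)\<^sup>2) \<le> Cmaj * l2_norm_sq f"
  using propmaj_l2_far[of R0 "\<lambda>y. norm (f y)" UNIV 0] R0 assms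
  unfolding Smaj_def Cmaj_def in_l2_def l2_norm_sq_def expw_tail_0 by auto

lemma Smaj_pointwise:
  assumes "in_l2 f"
  shows "(Smaj f x)\<^sup>2 \<le> Cmaj * l2_norm_sq f"
  using l2_pointwise[of "Smaj f" x] Smaj_l2[OF assms] by auto

lemma dS_le_Smaj:
  assumes "in_l2 f"
  shows "AE r in \<mu>. norm (dS r f x) \<le> Smaj f x"
  using supp
proof eventually_elim
  case (elim r)
  show ?case unfolding Smaj_def
    by (rule dS_le_propmaj[of f "sqrt (l2_norm_sq f)"]) (use in_l2_bound[OF assms] elim in auto)
qed

lemma qdens_integrable:
  assumes "in_l2 f"
  shows "integrable \<mu> (\<lambda>r. (norm (dS r f x))^4)"
proof (rule integrable_const_bound[where B="(Smaj f x)^4"])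
  show "AE r in \<mu>. norm ((norm (dS r f x))^4) \<le> (Smaj f x)^4"
    using dS_le_Smaj[OF assms, of x] by eventually_elim (auto intro!: power_mono)
  show "(\<lambda>r. (norm (dS r f x))^4) \<in> borel_measurable \<mu>"
    using dS_borel[OF assms] by measurable
qed

lemma qdens_nonneg: "0 \<le> qdens f x"
  unfolding qdens_def by (rule integral_nonneg_AE) auto

lemma qdens_le_Smaj_sq:
  assumes "in_l2 f"
  shows "qdens f x \<le> (mtot * Cmaj * l2_norm_sq f) * (Smaj f x)\<^sup>2"
proof -
  have "qdens f x \<le> (\<integral>r. (Smaj f x)^4 \<partial>\<mu>)" unfolding qdens_def
    by (rule integral_mono_AE[OF qdens_integrable[OF assms]])
       (use dS_le_Smaj[OF assms, of x] in \<open>auto elim!: eventually_mono intro!: power_mono\<close>)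
  also have "\<dots> = mtot * ((Smaj f x)\<^sup>2 * (Smaj f x)\<^sup>2)"
    by (simp add: mtot_def space_mu power2_eq_square power4_eq_xxxx)
  also have "\<dots> \<le> mtot * ((Cmaj * l2_norm_sq f) * (Smaj f x)\<^sup>2)"
    using Smaj_pointwise[OF assms, of x] mtot_nonneg by (intro mult_left_mono mult_right_mono) auto
  finally show ?thesis by (simp add: mult.assoc)
qed

lemma quart_summable:
  assumes "in_l2 f"
  shows "(\<lambda>x. qdens f x) summable_on UNIV"
  by (rule summable_on_comparison_test[where f="\<lambda>x. (mtot * Cmaj * l2_norm_sq f) * (Smaj f x)\<^sup>2"])
     (use Smaj_l2[OF assms] qdens_le_Smaj_sq[OF assms] qdens_nonneg
       in \<open>auto intro: summable_on_cmult_right\<close>)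

lemma quart_bounds:
  assumes "in_l2 f"
  shows "0 \<le> quart f \<and> quart f \<le> mtot * (Cmaj * l2_norm_sq f)\<^sup>2"
proof
  show "0 \<le> quart f" unfolding quart_def by (rule infsum_nonneg) (use qdens_nonneg in auto)
  have s2: "(\<lambda>x. (mtot * Cmaj * l2_norm_sq f) * (Smaj f x)\<^sup>2) summable_on UNIV"
    using Smaj_l2[OF assms] by (auto intro: summable_on_cmult_right)
  have "quart f \<le> (\<Sum>\<^sub>\<infinity>x. (mtot * Cmaj * l2_norm_sq f) * (Smaj f x)\<^sup>2)" unfolding quart_def
    by (rule infsum_mono[OF quart_summable[OF assms] s2]) (use qdens_le_Smaj_sq[OF assms] in auto)
  also have "\<dots> = (mtot * Cmaj * l2_norm_sq f) * (\<Sum>\<^sub>\<infinity>x. (Smaj f x)\<^sup>2)"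
    using Smaj_l2[OF assms] by (simp add: infsum_cmult_right)
  also have "\<dots> \<le> (mtot * Cmaj * l2_norm_sq f) * (Cmaj * l2_norm_sq f)"
    using Smaj_l2[OF assms] mtot_nonneg Cmaj_pos l2_norm_sq_nonneg[of f] by (intro mult_left_mono) auto
  finally show "quart f \<le> mtot * (Cmaj * l2_norm_sq f)\<^sup>2" by (simp add: power2_eq_square mult_ac)
qed

lemma Qd_diag_eq_quart:
  assumes "in_l2 f"
  shows "Qd \<mu> f f f f = complex_of_real (quart f)"
proof -
  have pt: "cnj z * z * cnj z * z = complex_of_real ((norm z)^4)" for z :: complex
  proof -
    have "cnj z * z = complex_of_real ((norm z)\<^sup>2)"
      using complex_norm_square[of z] by (simp only: mult.commute)
    then have "cnj z * z * cnj z * z = complex_of_real ((norm z)\<^sup>2) * complex_of_real ((norm z)\<^sup>2)"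
      by (metis mult.assoc)
    then show ?thesis by (simp add: power4_eq_xxxx power2_eq_square)
  qed
  have "Qd \<mu> f f f f = (\<Sum>\<^sub>\<infinity>x. complex_of_real (qdens f x))"
    unfolding Qd_def qdens_def pt integral_complex_of_real ..
  also have "\<dots> = complex_of_real (quart f)"
    unfolding quart_def using has_sum_of_real[OF has_sum_infsum[OF quart_summable[OF assms]]]
    by (rule infsumI)
  finally show ?thesis .
qed

lemma quart_scale:
  assumes "in_l2 f"
  shows "quart (\<lambda>y. c * f y) = (norm c)^4 * quart f"
proof -
  have "qdens (\<lambda>y. c * f y) x = (norm c)^4 * qdens f x" for x
  proof -
    have "dS r (\<lambda>y. c * f y) x = c * dS r f x" for r
      by (rule dS_scale[of f "sqrt (l2_norm_sq f)"]) (use in_l2_bound[OF assms] in auto)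
    then have "(\<lambda>r. (norm (dS r (\<lambda>y. c * f y) x))^4) = (\<lambda>r. (norm c)^4 * (norm (dS r f x))^4)"
      by (simp add: norm_mult power_mult_distrib)
    then show ?thesis unfolding qdens_def by simp
  qed
  then have "qdens (\<lambda>y. c * f y) = (\<lambda>x. (norm c)^4 * qdens f x)" by auto
  then show ?thesis unfolding quart_def by (simp add: infsum_cmult_right')
qed

lemma Pd_eq_Sup_quart:
  "Pd \<mu> lam = Sup {quart f | f. in_l2 f \<and> l2_norm_sq f = lam}"
proof -
  have "{Re (Qd \<mu> f f f f) | f. in_l2 f \<and> l2_norm_sq f = lam} = {quart f | f. in_l2 f \<and> l2_norm_sq f = lam}"
    using Qd_diag_eq_quart by force
  then show ?thesis unfolding Pd_def by simp
qed

lemma quart_le_Pd: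
  assumes "in_l2 f" "l2_norm_sq f = lam"
  shows "quart f \<le> Pd \<mu> lam"
  unfolding Pd_eq_Sup_quart
proof (rule cSup_upper)
  show "bdd_above {quart f | f. in_l2 f \<and> l2_norm_sq f = lam}"
    by (rule bdd_aboveI[where M="mtot * (Cmaj * lam)\<^sup>2"]) (use quart_bounds in auto)
qed (use assms in blast)

lemma quart_le_Pd_scaled:
  assumes lam: "lam > 0" and g: "in_l2 g"
  shows "quart g \<le> Pd \<mu> lam * (l2_norm_sq g / lam)\<^sup>2"
proof (cases "l2_norm_sq g = 0")
  case True
  then show ?thesis using quart_bounds[OF g] by simp
next
  case False
  then have gp: "l2_norm_sq g > 0" using l2_norm_sq_nonneg[of g] by simp
  define c where "c = complex_of_real (sqrt (lam / l2_norm_sq g))"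
  have nc: "(norm c)\<^sup>2 = lam / l2_norm_sq g" unfolding c_def using lam gp by simp
  have h: "in_l2 (\<lambda>x. c * g x)" "l2_norm_sq (\<lambda>x. c * g x) = lam"
    using l2_scale[OF g, of c] nc gp by auto
  have "(norm c)^4 = ((norm c)\<^sup>2)\<^sup>2" by (simp flip: power_mult)
  then have "(lam / l2_norm_sq g)\<^sup>2 * quart g \<le> Pd \<mu> lam"
    using quart_le_Pd[OF h] quart_scale[OF g, of c] nc by simp
  then show ?thesis using gp lam by (simp add: field_simps power2_eq_square)
qed

text \<open>A test function with positive functional: the indicator of a long interval, by
  dS_indicator_near_one.  Rescaling it shows P_lam > 0.\<close>

lemma quart_positive_witness:
  assumes "emeasure \<mu> UNIV \<noteq> 0"
  obtains f where "in_l2 f" "l2_norm_sq f > 0" "quart f > 0"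
proof -
  have "mtot \<noteq> 0" using assms emeasure_eq_measure[of UNIV] unfolding mtot_def by auto
  then have mpos: "mtot > 0" using mtot_nonneg by simp
  obtain N where N: "expw_tail (4*R0) N < 1/2"
    using expw_tail_eventually_small[of "1/2"] by auto
  have N': "expw_tail (4*R0) (Suc N) < 1/2"
    using N expw_tail_eq[of "4*R0"] expw_nonneg[of "4*R0" N] R0 by simp
  define f :: "int \<Rightarrow> complex" where "f x = (if \<bar>x\<bar> \<le> int N then 1 else 0)" for x
  have l2: "in_l2 f" unfolding in_l2_def
    by (subst summable_on_cong_neutral[where T="{-int N..int N}" and g="\<lambda>x. (norm (f x))\<^sup>2"])
       (auto simp: f_def)
  have "(norm (f 0))\<^sup>2 \<le> l2_norm_sq f"
    using l2_pointwise[of "\<lambda>x. norm (f x)" 0] l2 unfolding in_l2_def l2_norm_sq_def by simp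
  then have fpos: "l2_norm_sq f > 0" by (simp add: f_def)
  have "(\<integral>r. (1/16::real) \<partial>\<mu>) \<le> qdens f 0" unfolding qdens_def
  proof (rule integral_mono_AE[OF _ qdens_integrable[OF l2]])
    show "AE r in \<mu>. 1/16 \<le> (norm (dS r f 0))^4"
      using supp
    proof eventually_elim
      case (elim r)
      have "(1/2::real)^4 \<le> (norm (dS r f 0))^4"
        using dS_indicator_near_one[OF N' elim] unfolding f_def by (intro power_mono) auto
      then show ?case by (simp add: power_divide)
    qed
  qed simp
  then have "qdens f 0 > 0" using mpos by (simp add: mtot_def space_mu)
  moreover have "qdens f 0 \<le> quart f" unfolding quart_def
    by (rule single_le_infsum_nonneg[OF quart_summable[OF l2]]) (use qdens_nonneg in auto)
  ultimately show ?thesis using that l2 fpos by simp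
qed

lemma Pd_pos:
  assumes "emeasure \<mu> UNIV \<noteq> 0" "lam > 0"
  shows "Pd \<mu> lam > 0"
proof -
  obtain f where f: "in_l2 f" "l2_norm_sq f > 0" "quart f > 0"
    using quart_positive_witness[OF assms(1)] by blast
  define c where "c = complex_of_real (sqrt (lam / l2_norm_sq f))"
  have nc: "(norm c)\<^sup>2 = lam / l2_norm_sq f" unfolding c_def using assms f by simp
  have g: "in_l2 (\<lambda>x. c * f x)" "l2_norm_sq (\<lambda>x. c * f x) = lam"
    using l2_scale[OF f(1), of c] nc f by auto
  have "norm c > 0" unfolding c_def using assms f by simp
  then have "quart (\<lambda>x. c * f x) > 0" using quart_scale[OF f(1), of c] f by simp
  then show ?thesis using quart_le_Pd[OF g] by linarith
qed

end

section \<open>Splitting a function at a window\<close>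

lemma pow4_diff_le:
  fixes a c :: real
  assumes "0 \<le> a" "a \<le> c"
  shows "c^4 \<le> a^4 + 4 * (c - a) * c^3"
proof -
  have e: "c^4 - a^4 = (c-a)*(c^3+c^2*a+c*a^2+a^3)" by algebra
  have "c^2*a \<le> c^3" using assms by (simp add: power2_eq_square power3_eq_cube mult_left_mono)
  moreover have "c*a^2 \<le> c^3"
  proof -
    have "a^2 \<le> c^2" using assms by (intro power_mono) auto
    then have "c*a^2 \<le> c*c^2" using assms by (intro mult_left_mono) auto
    then show ?thesis by (simp add: power2_eq_square power3_eq_cube)
  qed
  moreover have "a^3 \<le> c^3" using assms by (intro power_mono) auto
  ultimately have "c^3+c^2*a+c*a^2+a^3 \<le> 4*c^3" by linarith
  then have "(c-a)*(c^3+c^2*a+c*a^2+a^3) \<le> (c-a)*(4*c^3)" using assms by (intro mult_left_mono) auto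
  then show ?thesis using e by (simp add: algebra_simps)
qed

lemma quartic_split:
  fixes u v w :: complex and U V W Z T :: real
  assumes "norm u \<le> U" "norm v \<le> V" "norm w \<le> W" "U + V + W \<le> T"
    and "norm u \<le> Z \<or> norm w \<le> Z"
  shows "(norm (u+v+w))^4 \<le> (norm u)^4 + (norm w)^4 + 4 * (V + Z) * T^3"
proof -
  define q where "q = norm (u + w)"
  define b where "b = norm v"
  have q0: "0 \<le> q" "0 \<le> b" by (auto simp: q_def b_def)
  have quw: "q \<le> norm u + norm w" unfolding q_def by (rule norm_triangle_ineq)
  have p: "norm (u+v+w) \<le> q + b" unfolding q_def b_def
    by (metis add.commute add.left_commute norm_triangle_ineq)
  have T1: "q + b \<le> T" using quw assms(1-4) unfolding b_def by linarith
  have "(norm (u+v+w))^4 \<le> (q+b)^4" using p by (intro power_mono) auto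
  also have "\<dots> \<le> q^4 + 4 * b * (q+b)^3"
    using pow4_diff_le[of q "q+b"] q0 by simp
  also have "\<dots> \<le> q^4 + 4 * V * T^3"
  proof -
    have "(q+b)^3 \<le> T^3" using T1 q0 by (intro power_mono) auto
    then have "b * (q+b)^3 \<le> V * T^3" using assms(2) q0 unfolding b_def
      by (intro mult_mono) (auto intro: order_trans[OF norm_ge_zero])
    then show ?thesis by simp
  qed
  also have "q^4 \<le> (norm u)^4 + (norm w)^4 + 4 * Z * T^3"
  proof -
    define mm where "mm = min (norm u) (norm w)"
    define MM where "MM = max (norm u) (norm w)"
    have s: "norm u + norm w = MM + mm" unfolding mm_def MM_def by auto
    have mmZ: "mm \<le> Z" using assms(5) unfolding mm_def by auto
    have mm0: "0 \<le> mm" unfolding mm_def by simp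
    have "q^4 \<le> (MM + mm)^4" using quw q0 s by (intro power_mono) auto
    also have "\<dots> \<le> MM^4 + 4 * mm * (MM+mm)^3"
      using pow4_diff_le[of MM "MM+mm"] mm0 unfolding MM_def by (simp add: le_max_iff_disj)
    also have "MM^4 \<le> (norm u)^4 + (norm w)^4" unfolding MM_def by (simp add: max_def)
    also have "(MM+mm)^3 \<le> T^3"
    proof (rule power_mono)
      show "MM + mm \<le> T" using s assms(1-4) norm_ge_zero[of v] by linarith
      show "0 \<le> MM + mm" using mm0 by (simp add: MM_def le_max_iff_disj)
    qed
    then have "4 * mm * (MM+mm)^3 \<le> 4 * Z * T^3" using mmZ mm0
      by (intro mult_mono) (auto simp: MM_def le_max_iff_disj)
    finally show ?thesis by simp
  qed
  finally show ?thesis by (simp add: algebra_simps)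
qed

text \<open>The cubic error term is made square-summable by the AM-GM inequality with parameter s:
  a small s penalizes the middle and far-field terms, a large s the total.\<close>

lemma cubic_error_le:
  fixes V Z T K s :: real
  assumes "0 \<le> V" "0 \<le> Z" "0 \<le> T" "T\<^sup>2 \<le> K" "s > 0"
  shows "4 * (V + Z) * T^3 \<le> 4 * K / s * (V\<^sup>2 + Z\<^sup>2) + 2 * K * s * T\<^sup>2"
proof -
  have K0: "0 \<le> K" using assms(4) zero_le_power2[of T] by linarith
  have amgm: "(V + Z) * T \<le> (V\<^sup>2 + Z\<^sup>2) / s + s * T\<^sup>2 / 2"
  proof -
    have "0 \<le> (V + Z - s*T)\<^sup>2 + (V - Z)\<^sup>2" by simp
    then have "2 * s * ((V + Z) * T) \<le> 2 * (V\<^sup>2 + Z\<^sup>2) + s\<^sup>2 * T\<^sup>2"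
      by (simp add: power2_eq_square algebra_simps)
    then show ?thesis using assms(5) by (simp add: field_simps power2_eq_square)
  qed
  have "T^3 \<le> K * T"
    using mult_right_mono[OF assms(4) assms(3)] by (simp add: power2_eq_square power3_eq_cube)
  then have "4 * (V + Z) * T^3 \<le> 4 * (V + Z) * (K * T)"
    using assms(1,2) by (intro mult_left_mono) auto
  also have "\<dots> = 4 * K * ((V + Z) * T)" by (simp add: algebra_simps)
  also have "\<dots> \<le> 4 * K * ((V\<^sup>2 + Z\<^sup>2) / s + s * T\<^sup>2 / 2)"
    using K0 amgm by (intro mult_left_mono) auto
  also have "\<dots> = 4 * K / s * (V\<^sup>2 + Z\<^sup>2) + 2 * K * s * T\<^sup>2"
    by (simp add: algebra_simps add_divide_distrib)
  finally show ?thesis .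
qed

context bounded_support_measure
begin

lemma three_piece_split:
  assumes f: "in_l2 f"
    and fe: "\<And>y. f y = g y + (m y + h y)"
    and nf: "\<And>y. norm (f y) = norm (g y) + (norm (m y) + norm (h y))"
  shows "dS r f x = dS r g x + dS r m x + dS r h x"
    and "Smaj f x = Smaj g x + Smaj m x + Smaj h x"
proof -
  define B where "B = sqrt (l2_norm_sq f)"
  have bf: "norm (f y) \<le> B" for y unfolding B_def by (rule in_l2_bound[OF f])
  have bg: "norm (g y) \<le> B" and bm: "norm (m y) \<le> B" and bh: "norm (h y) \<le> B" for y
    using bf[of y] nf[of y] norm_ge_zero[of "g y"] norm_ge_zero[of "m y"] norm_ge_zero[of "h y"]
    by linarith+
  have bmh: "norm (m y + h y) \<le> 2*B" for y
    by (rule norm_triangle_le) (use bm[of y] bh[of y] in linarith)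
  have "f = (\<lambda>y. g y + (m y + h y))" using fe by auto
  then have "dS r f x = dS r g x + dS r (\<lambda>y. m y + h y) x"
    using dS_add[of g B "\<lambda>y. m y + h y" "2*B" r x] bg bmh by simp
  also have "dS r (\<lambda>y. m y + h y) x = dS r m x + dS r h x"
    using dS_add[of m B h B r x] bm bh by simp
  finally show "dS r f x = dS r g x + dS r m x + dS r h x" by simp
  have "(\<lambda>y. norm (f y)) = (\<lambda>y. norm (g y) + (norm (m y) + norm (h y)))" using nf by auto
  then have "Smaj f x = propmaj R0 (\<lambda>y. norm (g y) + (norm (m y) + norm (h y))) x"
    unfolding Smaj_def by simp
  also have "\<dots> = Smaj g x + propmaj R0 (\<lambda>y. norm (m y) + norm (h y)) x"
    unfolding Smaj_def using bg bm bh R0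
    by (intro propmaj_add[where B=B and B'="2*B"]) (auto intro: add_mono[of _ B _ B, simplified])
  also have "propmaj R0 (\<lambda>y. norm (m y) + norm (h y)) x = Smaj m x + Smaj h x"
    unfolding Smaj_def using bm bh R0 by (intro propmaj_add[where B=B and B'=B]) auto
  finally show "Smaj f x = Smaj g x + Smaj m x + Smaj h x" by simp
qed

lemma qdens_split:
  assumes f: "in_l2 f" and g: "in_l2 g" and m: "in_l2 m" and h: "in_l2 h"
    and fe: "\<And>y. f y = g y + (m y + h y)"
    and nf: "\<And>y. norm (f y) = norm (g y) + (norm (m y) + norm (h y))"
    and Z: "\<And>r. \<bar>r\<bar> \<le> R0 \<Longrightarrow> norm (dS r g x) \<le> Z \<or> norm (dS r h x) \<le> Z"
  shows "qdens f x \<le> qdens g x + qdens h x + mtot * (4 * (Smaj m x + Z) * (Smaj f x)^3)"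
proof -
  note dSe = three_piece_split(1)[OF f fe nf]
  note Te = three_piece_split(2)[OF f fe nf]
  have AE: "AE r in \<mu>. (norm (dS r f x))^4
      \<le> (norm (dS r g x))^4 + (norm (dS r h x))^4 + 4 * (Smaj m x + Z) * (Smaj f x)^3"
    using supp dS_le_Smaj[OF g, of x] dS_le_Smaj[OF m, of x] dS_le_Smaj[OF h, of x]
  proof eventually_elim
    case (elim r)
    show ?case unfolding dSe
      by (rule quartic_split[where U="Smaj g x" and V="Smaj m x" and W="Smaj h x"])
         (use elim Z[OF elim(1)] Te in auto)
  qed
  have i1: "integrable \<mu> (\<lambda>r. (norm (dS r g x))^4 + (norm (dS r h x))^4)"
    using qdens_integrable[OF g, of x] qdens_integrable[OF h, of x]
    by (rule Bochner_Integration.integrable_add)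
  have "qdens f x \<le> (\<integral>r. (norm (dS r g x))^4 + (norm (dS r h x))^4
                           + 4 * (Smaj m x + Z) * (Smaj f x)^3 \<partial>\<mu>)"
    unfolding qdens_def
    by (rule integral_mono_AE[OF qdens_integrable[OF f] _ AE])
       (use i1 in \<open>rule Bochner_Integration.integrable_add, simp\<close>)
  also have "\<dots> = qdens g x + qdens h x + mtot * (4 * (Smaj m x + Z) * (Smaj f x)^3)"
    unfolding qdens_def
    by (simp add: Bochner_Integration.integral_add[OF i1 integrable_const]
        Bochner_Integration.integral_add[OF qdens_integrable[OF g] qdens_integrable[OF h]]
        mtot_def space_mu)
  finally show ?thesis .
qed

text \<open>Cut f into the part g left of c and the part h right of c + L.  Left of
  c + N the function h is at distance >= N, right of c + N so is g; hence the smaller of the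
  two majorants is square summable with sum controlled by the tail of the exponential series.\<close>

lemma far_field_l2:
  fixes c :: int
  assumes f: "in_l2 f" and NL: "2*N \<le> L"
  defines "Z \<equiv> \<lambda>x. if x < c + int N then Smaj (cutoff {x. c + int L \<le> x} f) x
                                         else Smaj (cutoff {x. x < c} f) x"
  shows "(\<lambda>x. (Z x)\<^sup>2) summable_on UNIV"
    and "(\<Sum>\<^sub>\<infinity>x. (Z x)\<^sup>2) \<le> expw_tail R0 N * exp (16*R0) * l2_norm_sq f"
proof -
  define g where "g = cutoff {x. x < c} f"
  define h where "h = cutoff {x. c + int L \<le> x} f"
  define X where "X = {x. x < c + int N}"
  define \<tau> where "\<tau> = expw_tail R0 N * exp (16*R0)"
  have \<tau>0: "\<tau> \<ge> 0" unfolding \<tau>_def using expw_tail_nonneg[OF R0] by simp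
  have g: "in_l2 g" "l2_norm_sq g = mass f {x. x < c}"
    unfolding g_def using cutoff_l2[OF f] by auto
  have h: "in_l2 h" "l2_norm_sq h = mass f {x. c + int L \<le> x}"
    unfolding h_def using cutoff_l2[OF f] by auto
  have hX: "(\<lambda>x. (Smaj h x)\<^sup>2) summable_on X \<and> (\<Sum>\<^sub>\<infinity>x\<in>X. (Smaj h x)\<^sup>2) \<le> \<tau> * l2_norm_sq h"
    unfolding Smaj_def l2_norm_sq_def \<tau>_def
  proof (rule propmaj_l2_far[OF R0])
    show "(\<lambda>x. (norm (h x))\<^sup>2) summable_on UNIV" using h(1) unfolding in_l2_def .
    fix x z assume "x \<in> X" "\<bar>z - x\<bar> < int N"
    then show "norm (h z) = 0" using NL unfolding X_def h_def cutoff_def by auto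
  qed auto
  have gX: "(\<lambda>x. (Smaj g x)\<^sup>2) summable_on -X \<and> (\<Sum>\<^sub>\<infinity>x\<in>-X. (Smaj g x)\<^sup>2) \<le> \<tau> * l2_norm_sq g"
    unfolding Smaj_def l2_norm_sq_def \<tau>_def
  proof (rule propmaj_l2_far[OF R0])
    show "(\<lambda>x. (norm (g x))\<^sup>2) summable_on UNIV" using g(1) unfolding in_l2_def .
    fix x z assume "x \<in> -X" "\<bar>z - x\<bar> < int N"
    then show "norm (g z) = 0" unfolding X_def g_def cutoff_def by auto
  qed auto
  have ZX: "(\<lambda>x. (Z x)\<^sup>2) summable_on X" "(\<Sum>\<^sub>\<infinity>x\<in>X. (Z x)\<^sup>2) = (\<Sum>\<^sub>\<infinity>x\<in>X. (Smaj h x)\<^sup>2)"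
    using hX summable_on_cong[of X "\<lambda>x. (Z x)\<^sup>2" "\<lambda>x. (Smaj h x)\<^sup>2"]
      infsum_cong[of X "\<lambda>x. (Z x)\<^sup>2" "\<lambda>x. (Smaj h x)\<^sup>2"]
    by (auto simp: Z_def X_def g_def h_def)
  have ZX': "(\<lambda>x. (Z x)\<^sup>2) summable_on -X" "(\<Sum>\<^sub>\<infinity>x\<in>-X. (Z x)\<^sup>2) = (\<Sum>\<^sub>\<infinity>x\<in>-X. (Smaj g x)\<^sup>2)"
    using gX summable_on_cong[of "-X" "\<lambda>x. (Z x)\<^sup>2" "\<lambda>x. (Smaj g x)\<^sup>2"]
      infsum_cong[of "-X" "\<lambda>x. (Z x)\<^sup>2" "\<lambda>x. (Smaj g x)\<^sup>2"]
    by (auto simp: Z_def X_def g_def h_def)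
  show "(\<lambda>x. (Z x)\<^sup>2) summable_on UNIV"
    using summable_on_union[OF ZX(1) ZX'(1)] by simp
  have "(\<Sum>\<^sub>\<infinity>x. (Z x)\<^sup>2) = (\<Sum>\<^sub>\<infinity>x\<in>X. (Z x)\<^sup>2) + (\<Sum>\<^sub>\<infinity>x\<in>-X. (Z x)\<^sup>2)"
    using infsum_Un_disjoint[OF ZX(1) ZX'(1)] by simp
  also have "\<dots> \<le> \<tau> * (l2_norm_sq g + l2_norm_sq h)"
    using hX gX ZX ZX' by (simp add: distrib_left)
  also have "l2_norm_sq g + l2_norm_sq h = mass f ({x. x < c} \<union> {x. c + int L \<le> x})"
    unfolding g(2) h(2) by (rule mass_union[OF f, symmetric]) auto
  also have "\<tau> * \<dots> \<le> \<tau> * l2_norm_sq f"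
    by (intro mult_left_mono mass_le_l2 f \<tau>0)
  finally show "(\<Sum>\<^sub>\<infinity>x. (Z x)\<^sup>2) \<le> expw_tail R0 N * exp (16*R0) * l2_norm_sq f"
    unfolding \<tau>_def .
qed

definition split_err :: "real \<Rightarrow> real \<Rightarrow> nat \<Rightarrow> real \<Rightarrow> real" where
  "split_err lam s N \<eta> = mtot * (4 * (Cmaj * lam) / s * (Cmaj * \<eta> + expw_tail R0 N * exp (16*R0) * lam)
      + 2 * (Cmaj * lam) * s * (Cmaj * lam))"

text \<open>Pointwise form of the splitting estimate at a window [c, c+L): the error of
  qdens_split, made square summable by cubic_error_le.  Here z is either of the two side
  majorants; the far-field bound later selects the smaller one.\<close>

lemma qdens_window_split:
  fixes c :: int
  assumes f: "in_l2 f" and s: "s > 0"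
    and z: "z = Smaj (cutoff {x. x < c} f) x \<or> z = Smaj (cutoff {x. c + int L \<le> x} f) x"
  shows "qdens f x \<le> qdens (cutoff {x. x < c} f) x + qdens (cutoff {x. c + int L \<le> x} f) x
           + mtot * (4 * (Cmaj * l2_norm_sq f) / s * ((Smaj (cutoff {c..<c + int L} f) x)\<^sup>2 + z\<^sup>2)
                     + 2 * (Cmaj * l2_norm_sq f) * s * (Smaj f x)\<^sup>2)"
proof -
  define g where "g = cutoff {x. x < c} f"
  define m where "m = cutoff {c..<c + int L} f"
  define h where "h = cutoff {x. c + int L \<le> x} f"
  have g: "in_l2 g" and m: "in_l2 m" and h: "in_l2 h"
    unfolding g_def m_def h_def using cutoff_l2[OF f] by auto
  have "qdens f x \<le> qdens g x + qdens h x + mtot * (4 * (Smaj m x + z) * (Smaj f x)^3)"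
  proof (rule qdens_split[OF f g m h])
    show "f y = g y + (m y + h y)" and "norm (f y) = norm (g y) + (norm (m y) + norm (h y))" for y
      unfolding g_def m_def h_def cutoff_def by auto
    fix r :: real assume r: "\<bar>r\<bar> \<le> R0"
    show "norm (dS r g x) \<le> z \<or> norm (dS r h x) \<le> z"
      using z in_l2_bound[OF g] in_l2_bound[OF h] unfolding g_def[symmetric] h_def[symmetric] Smaj_def
      by (auto intro!: dS_le_propmaj r)
  qed
  also have "4 * (Smaj m x + z) * (Smaj f x)^3
      \<le> 4 * (Cmaj * l2_norm_sq f) / s * ((Smaj m x)\<^sup>2 + z\<^sup>2) + 2 * (Cmaj * l2_norm_sq f) * s * (Smaj f x)\<^sup>2"
    by (rule cubic_error_le[OF Smaj_nonneg[OF m] _ Smaj_nonneg[OF f] Smaj_pointwise[OF f] s])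
       (use z Smaj_nonneg[OF g] Smaj_nonneg[OF h] in \<open>auto simp: g_def h_def\<close>)
  then have "mtot * (4 * (Smaj m x + z) * (Smaj f x)^3)
      \<le> mtot * (4 * (Cmaj * l2_norm_sq f) / s * ((Smaj m x)\<^sup>2 + z\<^sup>2) + 2 * (Cmaj * l2_norm_sq f) * s * (Smaj f x)\<^sup>2)"
    using mtot_nonneg by (rule mult_left_mono)
  finally show ?thesis unfolding g_def m_def h_def by simp
qed

lemma quart_split_estimate:
  assumes f: "in_l2 f" and NL: "2*N \<le> L" and s: "s > 0"
  shows "quart f \<le> quart (cutoff {x. x < c} f) + quart (cutoff {x. c + int L \<le> x} f)
                    + split_err (l2_norm_sq f) s N (mass f {c..<c + int L})"
proof -
  define g where "g = cutoff {x. x < c} f"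
  define m where "m = cutoff {c..<c + int L} f"
  define h where "h = cutoff {x. c + int L \<le> x} f"
  define K where "K = Cmaj * l2_norm_sq f"
  define Z where "Z x = (if x < c + int N then Smaj h x else Smaj g x)" for x
  have g: "in_l2 g" and m: "in_l2 m" "l2_norm_sq m = mass f {c..<c + int L}" and h: "in_l2 h"
    unfolding g_def m_def h_def using cutoff_l2[OF f] by auto
  have lZ: "(\<lambda>x. (Z x)\<^sup>2) summable_on UNIV"
    and sumZ: "(\<Sum>\<^sub>\<infinity>x. (Z x)\<^sup>2) \<le> expw_tail R0 N * exp (16*R0) * l2_norm_sq f"
    using far_field_l2[OF f NL, of c] unfolding Z_def g_def h_def by simp_all
  have lf: "(\<lambda>x. (Smaj f x)\<^sup>2) summable_on UNIV" "(\<Sum>\<^sub>\<infinity>x. (Smaj f x)\<^sup>2) \<le> K"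
    using Smaj_l2[OF f] unfolding K_def by auto
  have lm: "(\<lambda>x. (Smaj m x)\<^sup>2) summable_on UNIV" "(\<Sum>\<^sub>\<infinity>x. (Smaj m x)\<^sup>2) \<le> Cmaj * mass f {c..<c + int L}"
    using Smaj_l2[OF m(1)] m(2) by auto
  define a where "a = 4 * K / s"
  define b where "b = 2 * K * s"
  define D where "D x = a * ((Smaj m x)\<^sup>2 + (Z x)\<^sup>2) + b * (Smaj f x)\<^sup>2" for x
  have pointwise: "qdens f x \<le> qdens g x + qdens h x + mtot * D x" for x
    using qdens_window_split[OF f s, of "Z x" c x L]
    unfolding D_def a_def b_def K_def g_def m_def h_def Z_def by auto
  have sD: "D summable_on UNIV"
    unfolding D_def using lm(1) lZ lf(1)
    by (intro summable_on_add summable_on_cmult_right) auto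
  have "quart f \<le> (\<Sum>\<^sub>\<infinity>x. qdens g x + qdens h x + mtot * D x)" unfolding quart_def
    by (rule infsum_mono[OF quart_summable[OF f]])
       (use pointwise quart_summable[OF g] quart_summable[OF h] sD
        in \<open>auto intro!: summable_on_add summable_on_cmult_right\<close>)
  also have "\<dots> = quart g + quart h + mtot * (\<Sum>\<^sub>\<infinity>x. D x)" unfolding quart_def
    using quart_summable[OF g] quart_summable[OF h] sD
    by (simp add: infsum_add summable_on_add summable_on_cmult_right infsum_cmult_right)
  also have "(\<Sum>\<^sub>\<infinity>x. D x)
      = a * ((\<Sum>\<^sub>\<infinity>x. (Smaj m x)\<^sup>2) + (\<Sum>\<^sub>\<infinity>x. (Z x)\<^sup>2)) + b * (\<Sum>\<^sub>\<infinity>x. (Smaj f x)\<^sup>2)"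
    unfolding D_def using lm(1) lZ lf(1)
    by (simp add: infsum_add summable_on_add summable_on_cmult_right infsum_cmult_right)
  also have "\<dots> \<le> a * (Cmaj * mass f {c..<c + int L} + expw_tail R0 N * exp (16*R0) * l2_norm_sq f)
                 + b * K"
    using lm(2) sumZ lf(2) s Cmaj_pos l2_norm_sq_nonneg[of f] unfolding K_def a_def b_def
    by (intro add_mono mult_left_mono) auto
  finally show ?thesis
    using mtot_nonneg unfolding split_err_def g_def h_def K_def a_def b_def
    by (simp add: mult_left_mono)
qed

end

section \<open>From the window dichotomy to concentration\<close>

lemma tail_mass_small:
  assumes f: "in_l2 f" and e: "e > 0"
  obtains T :: nat where "mass f {x. \<bar>x\<bar> > int T} \<le> e"
proof -
  obtain F where F: "finite F" "dist (sum (\<lambda>x. (norm (f x))\<^sup>2) F) (l2_norm_sq f) \<le> e"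
    using infsum_finite_approximation[OF f[unfolded in_l2_def] e] unfolding l2_norm_sq_def by auto
  obtain T :: nat where T: "\<And>x. x \<in> F \<Longrightarrow> \<bar>x\<bar> \<le> int T"
  proof -
    have "finite (nat ` abs ` F)" using F(1) by simp
    then obtain T where "\<forall>y\<in>nat ` abs ` F. y \<le> T" using finite_nat_set_iff_bounded_le by blast
    then show ?thesis using that[of T] by force
  qed
  have "sum (\<lambda>x. (norm (f x))\<^sup>2) F \<le> mass f {x. \<bar>x\<bar> \<le> int T}"
    unfolding mass_def by (rule sum_le_infsum_nonneg) (use F T mass_summable[OF f] in auto)
  moreover have "{x. \<bar>x\<bar> > int T} = - {x. \<bar>x\<bar> \<le> int T}" by auto
  ultimately have "mass f {x. \<bar>x\<bar> > int T} \<le> e"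
    using mass_compl[OF f] F(2) by (simp add: dist_real_def)
  then show ?thesis by (rule that)
qed

lemma mass_left_edge:
  assumes f: "in_l2 f" and e: "0 < e" "2*e < l2_norm_sq f"
  obtains a where "mass f {x. x < a} \<ge> e" "mass f {x. x < a - 1} < e"
proof -
  obtain T :: nat where T: "mass f {x. \<bar>x\<bar> > int T} \<le> e/2"
    using tail_mass_small[OF f, of "e/2"] e by auto
  define P where "P k \<longleftrightarrow> mass f {x. x < - int T + int k} \<ge> e" for k :: nat
  have "P (2*T+1)"
  proof -
    define U where "U = {x. x \<ge> int T + 1}"
    have "U \<subseteq> {x. \<bar>x\<bar> > int T}" unfolding U_def by auto
    then have "mass f U \<le> e/2" using mass_mono[OF f] T by (meson order_trans)
    moreover have "{x. x < - int T + int (2*T+1)} = -U" unfolding U_def by auto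
    ultimately show ?thesis unfolding P_def using mass_compl[OF f, of U] e by simp
  qed
  then obtain k where Pk: "P k" and least: "\<And>j. j < k \<Longrightarrow> \<not> P j"
    using exists_least_iff[of P] by blast
  have "k > 0"
  proof (rule ccontr)
    assume "\<not> k > 0"
    then have big: "mass f {x. x < - int T} \<ge> e" using Pk unfolding P_def by simp
    have "{x. x < - int T} \<subseteq> {x. \<bar>x\<bar> > int T}" by auto
    then have "mass f {x. x < - int T} \<le> e/2" using mass_mono[OF f] T by (meson order_trans)
    with big e show False by linarith
  qed
  then have "\<not> P (k - 1)" by (intro least) simp
  with Pk \<open>k > 0\<close> show ?thesis
    by (intro that[of "- int T + int k"]) (auto simp: P_def algebra_simps)
qed

lemma mass_right_edge:
  assumes f: "in_l2 f" and e: "0 < e"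
  obtains k :: nat where "mass f {x. a + int k + int L \<le> x} < e"
    and "\<And>j. j < k \<Longrightarrow> mass f {x. a + int j + int L \<le> x} \<ge> e"
proof -
  obtain T :: nat where T: "mass f {x. \<bar>x\<bar> > int T} \<le> e/2"
    using tail_mass_small[OF f, of "e/2"] e by auto
  define P where "P k \<longleftrightarrow> mass f {x. a + int k + int L \<le> x} < e" for k :: nat
  have sub: "{x. a + int (nat (\<bar>a\<bar> + int T + 1)) + int L \<le> x} \<subseteq> {x. \<bar>x\<bar> > int T}" by auto
  have "P (nat (\<bar>a\<bar> + int T + 1))"
    using mass_mono[OF f sub] T e unfolding P_def by linarith
  then obtain k where "P k" "\<And>j. j < k \<Longrightarrow> \<not> P j"
    using exists_least_iff[of P] by blast
  then show ?thesis using that unfolding P_def by (simp add: not_less)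
qed

lemma heavy_blocks_count:
  assumes f: "in_l2 f"
    and blk: "\<And>j. j < J \<Longrightarrow> mass f {a + int j * int L ..< a + int (Suc j) * int L} > \<eta>"
  shows "real J * \<eta> \<le> l2_norm_sq f"
proof -
  have "real j * \<eta> \<le> mass f {a ..< a + int j * int L}" if "j \<le> J" for j
    using that
  proof (induction j)
    case 0 then show ?case using mass_nonneg by simp
  next
    case (Suc j)
    have "{a ..< a + int (Suc j) * int L}
        = {a ..< a + int j * int L} \<union> {a + int j * int L ..< a + int (Suc j) * int L}"
      by (rule ivl_disj_un_two(3)[symmetric]) (auto simp: algebra_simps)
    then have "mass f {a ..< a + int (Suc j) * int L}
        = mass f {a ..< a + int j * int L} + mass f {a + int j * int L ..< a + int (Suc j) * int L}"
      using mass_union[OF f] by (simp add: ivl_disj_int)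
    then show ?case using blk[of j] Suc by (simp add: algebra_simps)
  qed
  then have "real J * \<eta> \<le> mass f {a ..< a + int J * int L}" by simp
  also have "\<dots> \<le> l2_norm_sq f" by (rule mass_le_l2[OF f])
  finally show ?thesis .
qed

lemma heavy_run_short:
  assumes f: "in_l2 f" and L: "L > 0" and \<eta>: "\<eta> > 0"
    and heavy: "\<And>j. j < k \<Longrightarrow> mass f {a + int j ..< a + int j + int L} > \<eta>"
  shows "k + 1 \<le> L * (nat \<lceil>l2_norm_sq f / \<eta>\<rceil> + 1)"
proof -
  define J where "J = k div L"
  have JL: "J * L \<le> k" unfolding J_def by (metis div_mult_mod_eq le_add1)
  have "real J * \<eta> \<le> l2_norm_sq f"
  proof (rule heavy_blocks_count[OF f])
    fix j assume "j < J"
    then have "(j+1) * L \<le> k" using mult_le_mono1[of "j+1" J L] JL by simp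
    then have "j * L < k" using L by simp
    then show "mass f {a + int j * int L ..< a + int (Suc j) * int L} > \<eta>"
      using heavy[of "j * L"] by (simp add: algebra_simps)
  qed
  then have "real J \<le> l2_norm_sq f / \<eta>" using \<eta> by (simp add: field_simps)
  then have "J \<le> nat \<lceil>l2_norm_sq f / \<eta>\<rceil>" by linarith
  moreover have "k < L * (J + 1)"
  proof -
    have "k = L * J + k mod L" unfolding J_def by simp
    moreover have "k mod L < L" using L by simp
    ultimately show ?thesis by (simp add: algebra_simps)
  qed
  ultimately show ?thesis
    using mult_le_mono2[of "J + 1" "nat \<lceil>l2_norm_sq f / \<eta>\<rceil> + 1" L] by linarith
qed

text \<open>Between the left edge a and the first window whose right side is light,
  all windows are heavy, so this stretch is short.\<close>

lemma concentration_from_dichotomy: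
  assumes f: "in_l2 f" and e: "0 < e" "2*e < l2_norm_sq f"
    and \<eta>: "\<eta> > 0" and L: "L > 0"
    and dichotomy: "\<And>c. mass f {c ..< c + int L} > \<eta> \<or> mass f {x. x < c} < e
                        \<or> mass f {x. c + int L \<le> x} < e"
  shows "\<exists>\<xi>. mass f {x. \<bar>x - \<xi>\<bar> > int (L * (nat \<lceil>l2_norm_sq f / \<eta>\<rceil> + 2))} < 2*e"
proof -
  obtain a where la: "mass f {x. x < a} \<ge> e" and la1: "mass f {x. x < a - 1} < e"
    using mass_left_edge[OF f e] by blast
  obtain k where rk: "mass f {x. a + int k + int L \<le> x} < e"
    and rj: "\<And>j. j < k \<Longrightarrow> mass f {x. a + int j + int L \<le> x} \<ge> e"
    using mass_right_edge[OF f e(1)] by blast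
  have "k + 1 \<le> L * (nat \<lceil>l2_norm_sq f / \<eta>\<rceil> + 1)"
  proof (rule heavy_run_short[OF f L \<eta>])
    fix j assume j: "j < k"
    have "mass f {x. x < a} \<le> mass f {x. x < a + int j}" by (rule mass_mono[OF f]) auto
    then show "mass f {a + int j ..< a + int j + int L} > \<eta>"
      using dichotomy[of "a + int j"] rj[OF j] la by linarith
  qed
  then have "int (k + 1) \<le> int (L * (nat \<lceil>l2_norm_sq f / \<eta>\<rceil> + 1))"
    by (simp only: of_nat_le_iff)
  then have far: "a + int k + int L \<le> a - 1 + int (L * (nat \<lceil>l2_norm_sq f / \<eta>\<rceil> + 2))"
    by (simp add: algebra_simps)
  have "mass f {x. \<bar>x - (a - 1)\<bar> > int (L * (nat \<lceil>l2_norm_sq f / \<eta>\<rceil> + 2))}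
      \<le> mass f ({x. x < a - 1} \<union> {x. a + int k + int L \<le> x})"
    by (rule mass_mono[OF f]) (use far in auto)
  also have "\<dots> = mass f {x. x < a - 1} + mass f {x. a + int k + int L \<le> x}"
    by (rule mass_union[OF f]) auto
  also have "\<dots> < 2 * e" using la1 rk by simp
  finally show ?thesis by blast
qed

section \<open>Concentration along a maximizing sequence\<close>

text \<open>Strict convexity of t \<mapsto> t^2: splitting the mass lam into two parts of size >= e loses
  at least 2 P e^2 / lam^2 in the bound P (alpha/lam)^2 + P (beta/lam)^2.\<close>

lemma split_loss:
  fixes P lam e \<alpha> \<beta> :: real
  assumes "P \<ge> 0" "lam > 0" "e \<ge> 0" "\<alpha> \<ge> e" "\<beta> \<ge> e" "\<alpha> + \<beta> \<le> lam"
  shows "P * (\<alpha> / lam)\<^sup>2 + P * (\<beta> / lam)\<^sup>2 \<le> P - 2 * P * e\<^sup>2 / lam\<^sup>2"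
proof -
  have "(\<alpha> + \<beta>)\<^sup>2 \<le> lam\<^sup>2" using assms by (intro power_mono) auto
  moreover have "e * e \<le> \<alpha> * \<beta>" using assms by (intro mult_mono) auto
  ultimately have "\<alpha>\<^sup>2 + \<beta>\<^sup>2 \<le> lam\<^sup>2 - 2 * e\<^sup>2" by (simp add: power2_eq_square algebra_simps)
  then have "P * (\<alpha>\<^sup>2 + \<beta>\<^sup>2) / lam\<^sup>2 \<le> P * (lam\<^sup>2 - 2 * e\<^sup>2) / lam\<^sup>2"
    using assms by (intro divide_right_mono mult_left_mono) auto
  then show ?thesis using assms(2) by (simp add: field_simps)
qed

lemma frac_le: "0 \<le> X \<Longrightarrow> 0 \<le> t \<Longrightarrow> X * (t / (X + 1)) \<le> (t::real)"
  by (simp add: field_simps mult_right_mono)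

context bounded_support_measure
begin

lemma split_err_mono:
  assumes "lam \<ge> 0" "s > 0" "\<eta> \<le> \<eta>'"
  shows "split_err lam s N \<eta> \<le> split_err lam s N \<eta>'"
  unfolding split_err_def using assms Cmaj_pos mtot_nonneg
  by (intro mult_left_mono add_mono order_refl) (auto intro!: divide_nonneg_pos)

text \<open>The splitting error can be made arbitrarily small by choosing first s, then the window
  mass eta, and finally the far-field range N.\<close>

lemma split_err_small:
  assumes lam: "lam \<ge> 0" and \<delta>: "\<delta> > 0"
  obtains s N \<eta> where "s > 0" "\<eta> > 0" "split_err lam s N \<eta> \<le> \<delta>"
proof -
  define A where "A = mtot * Cmaj * lam"
  have A: "A \<ge> 0" unfolding A_def using mtot_nonneg Cmaj_pos lam by simp
  define s where "s = \<delta>/3 / (2 * A * Cmaj * lam + 1)"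
  have s: "s > 0" unfolding s_def using \<delta> A Cmaj_pos lam by (simp add: add_nonneg_pos)
  define \<eta> where "\<eta> = \<delta>/3 / (4 * A * Cmaj / s + 1)"
  have \<eta>: "\<eta> > 0" unfolding \<eta>_def using \<delta> A Cmaj_pos s by (simp add: add_nonneg_pos)
  define X where "X = 4 * A * exp (16*R0) * lam / s"
  have X: "X \<ge> 0" unfolding X_def using A s lam by simp
  obtain N where N: "expw_tail R0 N < \<delta>/3 / (X + 1)"
    using expw_tail_eventually_small[of "\<delta>/3 / (X + 1)"] \<delta> X by auto
  have "split_err lam s N \<eta>
      = (4 * A * Cmaj / s) * \<eta> + X * expw_tail R0 N + (2 * A * Cmaj * lam) * s"
    unfolding split_err_def A_def X_def using s by (simp add: field_simps)
  also have "\<dots> \<le> \<delta>/3 + \<delta>/3 + \<delta>/3"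
  proof (intro add_mono)
    show "(4 * A * Cmaj / s) * \<eta> \<le> \<delta>/3"
      unfolding \<eta>_def by (rule frac_le) (use A Cmaj_pos s \<delta> in auto)
    have "X * expw_tail R0 N \<le> X * (\<delta>/3 / (X + 1))" using N X by (intro mult_left_mono) auto
    also have "\<dots> \<le> \<delta>/3" by (rule frac_le) (use X \<delta> in auto)
    finally show "X * expw_tail R0 N \<le> \<delta>/3" .
    show "(2 * A * Cmaj * lam) * s \<le> \<delta>/3"
      unfolding s_def using frac_le[of "2 * A * Cmaj * lam" "\<delta>/3"] A Cmaj_pos lam \<delta>
      by (simp add: mult.commute)
  qed
  finally show ?thesis using that s \<eta> by simp
qed

text \<open>If Q(f) is within P e^2/lam^2 of its supremum and the splitting error
  for window mass eta is below this gap, then every window of length L >= 2N carries mass > eta,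
  or one of its sides has mass < e: otherwise splitting would lose too much.\<close>

lemma window_dichotomy:
  assumes mu0: "emeasure \<mu> UNIV \<noteq> 0" and lam: "lam > 0"
    and f: "in_l2 f" "l2_norm_sq f = lam" and e: "e \<ge> 0"
    and NL: "2*N \<le> L" and s: "s > 0"
    and err: "split_err lam s N \<eta> \<le> Pd \<mu> lam * e\<^sup>2 / lam\<^sup>2"
    and near: "quart f > Pd \<mu> lam - Pd \<mu> lam * e\<^sup>2 / lam\<^sup>2"
  shows "mass f {c ..< c + int L} > \<eta> \<or> mass f {x. x < c} < e \<or> mass f {x. c + int L \<le> x} < e"
proof (rule ccontr)
  assume "\<not> ?thesis"
  then have m: "mass f {c ..< c + int L} \<le> \<eta>" and \<alpha>: "mass f {x. x < c} \<ge> e"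
    and \<beta>: "mass f {x. c + int L \<le> x} \<ge> e" by auto
  define P where "P = Pd \<mu> lam"
  have P: "P \<ge> 0" unfolding P_def using Pd_pos[OF mu0 lam] by simp
  have total: "mass f {x. x < c} + mass f {c ..< c + int L} + mass f {x. c + int L \<le> x} = lam"
  proof -
    have "UNIV = ({x. x < c} \<union> {c ..< c + int L}) \<union> {x. c + int L \<le> x}" by auto
    then have "lam = mass f (({x. x < c} \<union> {c ..< c + int L}) \<union> {x. c + int L \<le> x})"
      using mass_UNIV[of f] f(2) by simp
    also have "\<dots> = mass f {x. x < c} + mass f {c ..< c + int L} + mass f {x. c + int L \<le> x}"
      by (subst mass_union[OF f(1)], force, subst mass_union[OF f(1)]) auto
    finally show ?thesis by simp
  qed
  have parts: "quart (cutoff A f) \<le> P * (mass f A / lam)\<^sup>2" for A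
    using quart_le_Pd_scaled[OF lam cutoff_l2(1)[OF f(1)]] cutoff_l2(2)[OF f(1)]
    unfolding P_def by simp
  have "quart f \<le> quart (cutoff {x. x < c} f) + quart (cutoff {x. c + int L \<le> x} f)
                  + split_err lam s N (mass f {c..<c + int L})"
    using quart_split_estimate[OF f(1) NL s] f(2) by simp
  also have "\<dots> \<le> P * (mass f {x. x < c} / lam)\<^sup>2 + P * (mass f {x. c + int L \<le> x} / lam)\<^sup>2
                  + split_err lam s N \<eta>"
    using parts split_err_mono[OF _ s m] lam by (intro add_mono) auto
  also have "\<dots> \<le> P - 2 * P * e\<^sup>2 / lam\<^sup>2 + P * e\<^sup>2 / lam\<^sup>2"
    using split_loss[OF P lam e \<alpha> \<beta>] total mass_nonneg[of f "{c ..< c + int L}"] err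
    unfolding P_def by (intro add_mono) auto
  finally show False using near unfolding P_def by simp
qed

end

text \<open>Uniform concentration for all but finitely many terms extends to the whole sequence,
  since each single term is tight.\<close>

lemma concentration_all_terms:
  fixes f :: "nat \<Rightarrow> int \<Rightarrow> complex"
  assumes f: "\<And>n. in_l2 (f n)" and \<epsilon>: "\<epsilon> > 0"
    and late: "\<And>n. n \<ge> n0 \<Longrightarrow> \<exists>\<xi>. mass (f n) {x. \<bar>x - \<xi>\<bar> > int R1} \<le> \<epsilon>"
  shows "\<exists>R::nat. \<forall>n. \<exists>\<xi>. mass (f n) {x. \<bar>x - \<xi>\<bar> > int R} \<le> \<epsilon>"
proof -
  have "\<forall>n. \<exists>T::nat. mass (f n) {x. \<bar>x\<bar> > int T} \<le> \<epsilon>"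
  proof
    fix n
    obtain T :: nat where "mass (f n) {x. \<bar>x\<bar> > int T} \<le> \<epsilon>" by (rule tail_mass_small[OF f \<epsilon>])
    then show "\<exists>T::nat. mass (f n) {x. \<bar>x\<bar> > int T} \<le> \<epsilon>" ..
  qed
  then obtain T where T: "\<And>n. mass (f n) {x. \<bar>x\<bar> > int (T n)} \<le> \<epsilon>"
    using choice[of "\<lambda>n T. mass (f n) {x. \<bar>x\<bar> > int T} \<le> \<epsilon>"] by blast
  define R where "R = R1 + (\<Sum>k<n0. T k)"
  have "\<exists>\<xi>. mass (f n) {x. \<bar>x - \<xi>\<bar> > int R} \<le> \<epsilon>" for n
  proof (cases "n \<ge> n0")
    case True
    then obtain \<xi> where \<xi>: "mass (f n) {x. \<bar>x - \<xi>\<bar> > int R1} \<le> \<epsilon>" using late by blast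
    have "R1 \<le> R" unfolding R_def by simp
    then have "mass (f n) {x. \<bar>x - \<xi>\<bar> > int R} \<le> mass (f n) {x. \<bar>x - \<xi>\<bar> > int R1}"
      by (intro mass_mono[OF f]) auto
    then show ?thesis using \<xi> by (blast intro: order_trans)
  next
    case False
    then have "n \<in> {..<n0}" by simp
    then have "T n \<le> (\<Sum>k<n0. T k)" by (rule member_le_sum) auto
    then have "T n \<le> R" unfolding R_def by simp
    then have "mass (f n) {x. \<bar>x - 0\<bar> > int R} \<le> mass (f n) {x. \<bar>x\<bar> > int (T n)}"
      by (intro mass_mono[OF f]) auto
    then show ?thesis using T[of n] by (blast intro: order_trans)
  qed
  then show ?thesis by blast
qed

context bounded_support_measure
begin

lemma uniform_concentration:
  assumes mu0: "emeasure \<mu> UNIV \<noteq> 0" and lam: "lam > 0"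
    and f: "\<And>n. in_l2 (f n)" "\<And>n. l2_norm_sq (f n) = lam"
    and lim: "(\<lambda>n. quart (f n)) \<longlonglongrightarrow> Pd \<mu> lam"
    and \<epsilon>: "0 < \<epsilon>" "\<epsilon> < lam"
  shows "\<exists>R::nat. \<forall>n. \<exists>\<xi>. mass (f n) {x. \<bar>x - \<xi>\<bar> > int R} \<le> \<epsilon>"
proof -
  define e where "e = \<epsilon> / 2"
  define gap where "gap = Pd \<mu> lam * e\<^sup>2 / lam\<^sup>2"
  have gap: "gap > 0" unfolding gap_def e_def using Pd_pos[OF mu0 lam] \<epsilon> lam by simp
  have lam0: "lam \<ge> 0" using lam by simp
  obtain s N \<eta> where s: "s > 0" and \<eta>: "\<eta> > 0" and err: "split_err lam s N \<eta> \<le> gap"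
    by (rule split_err_small[OF lam0 gap])
  define L where "L = 2 * N + 1"
  have NL: "2 * N \<le> L" and L: "L > 0" unfolding L_def by simp_all
  have e: "0 < e" "2 * e < lam" unfolding e_def using \<epsilon> by simp_all
  obtain n0 where "\<forall>n\<ge>n0. norm (quart (f n) - Pd \<mu> lam) < gap"
    using LIMSEQ_D[OF lim gap] by blast
  then have near: "quart (f n) > Pd \<mu> lam - Pd \<mu> lam * e\<^sup>2 / lam\<^sup>2" if "n \<ge> n0" for n
    using that unfolding gap_def by (auto simp: abs_less_iff)
  have "\<exists>\<xi>. mass (f n) {x. \<bar>x - \<xi>\<bar> > int (L * (nat \<lceil>lam / \<eta>\<rceil> + 2))} \<le> \<epsilon>" if "n \<ge> n0" for n
  proof -
    have "\<And>c. mass (f n) {c ..< c + int L} > \<eta> \<or> mass (f n) {x. x < c} < e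
                   \<or> mass (f n) {x. c + int L \<le> x} < e"
      using window_dichotomy[OF mu0 lam f(1)[of n] f(2)[of n] _ NL s err[unfolded gap_def] near[OF that]] e
      by simp
    with concentration_from_dichotomy[OF f(1)[of n] e[unfolded f(2)[of n, symmetric]] \<eta> L]
    obtain \<xi> where "mass (f n) {x. \<bar>x - \<xi>\<bar> > int (L * (nat \<lceil>lam / \<eta>\<rceil> + 2))} < 2 * e"
      using f(2)[of n] by auto
    then show ?thesis unfolding e_def by (intro exI[of _ \<xi>]) simp
  qed
  then show ?thesis by (rule concentration_all_terms[OF f(1) \<epsilon>(1)])
qed

end

section \<open>Choosing the centres once and for all\<close>

text \<open>Recentering: two balls that each carry at least 2/3 of the mass must intersect, so a
  centre chosen for accuracy lam/3 also works for any finer accuracy, at a larger radius.\<close>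

lemma recentering:
  assumes f: "in_l2 f" "l2_norm_sq f = lam" and lam: "lam > 0"
    and \<xi>: "mass f {x. \<bar>x - \<xi>\<bar> > R} \<le> lam/3"
    and \<xi>': "mass f {x. \<bar>x - \<xi>'\<bar> > R'} \<le> \<epsilon>" and \<epsilon>: "\<epsilon> \<le> lam/3"
  shows "mass f {x. \<bar>x - \<xi>\<bar> > R + 2 * R'} \<le> \<epsilon>"
proof -
  have close: "\<bar>\<xi> - \<xi>'\<bar> \<le> R + R'"
  proof (rule ccontr)
    assume far: "\<not> ?thesis"
    define B where "B = {x. \<bar>x - \<xi>\<bar> \<le> R}"
    define B' where "B' = {x. \<bar>x - \<xi>'\<bar> \<le> R'}"
    have "B = - {x. \<bar>x - \<xi>\<bar> > R}" "B' = - {x. \<bar>x - \<xi>'\<bar> > R'}"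
      unfolding B_def B'_def by auto
    then have "mass f B \<ge> 2*lam/3" "mass f B' \<ge> 2*lam/3"
      using mass_compl[OF f(1)] \<xi> \<xi>' \<epsilon> f(2) by auto
    moreover have "mass f (B \<union> B') = mass f B + mass f B'"
      using far by (intro mass_union[OF f(1)]) (auto simp: B_def B'_def)
    moreover have "mass f (B \<union> B') \<le> lam" using mass_le_l2[OF f(1)] f(2) by simp
    ultimately show False using lam by simp
  qed
  have "{x. \<bar>x - \<xi>\<bar> > R + 2 * R'} \<subseteq> {x. \<bar>x - \<xi>'\<bar> > R'}" using close by auto
  then show ?thesis using mass_mono[OF f(1)] \<xi>' by (meson order_trans)
qed

lemma SUP_tendsto_zero_at_top:
  fixes F :: "real \<Rightarrow> nat \<Rightarrow> real"
  assumes nonneg: "\<And>R n. 0 \<le> F R n" and bounded: "\<And>R n. F R n \<le> B"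
    and small: "\<And>\<epsilon>. \<epsilon> > 0 \<Longrightarrow> \<exists>R0. \<forall>R\<ge>R0. \<forall>n. F R n \<le> \<epsilon>"
  shows "((\<lambda>R. SUP n. F R n) \<longlongrightarrow> 0) at_top"
proof (rule order_tendstoI)
  have bdd: "bdd_above (range (F R))" for R
    by (rule bdd_aboveI[where M=B]) (use bounded in auto)
  fix a :: real
  show "\<forall>\<^sub>F R in at_top. a < (SUP n. F R n)" if "a < 0"
  proof (rule always_eventually, rule allI)
    fix R
    have "0 \<le> F R 0" by (rule nonneg)
    also have "\<dots> \<le> (SUP n. F R n)" by (rule cSUP_upper[OF UNIV_I bdd])
    finally show "a < (SUP n. F R n)" using that by linarith
  qed
  show "\<forall>\<^sub>F R in at_top. (SUP n. F R n) < a" if "a > 0"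
  proof -
    obtain R0 where R0: "\<And>R n. R \<ge> R0 \<Longrightarrow> F R n \<le> a/2" using small[of "a/2"] \<open>a > 0\<close> by auto
    have "(SUP n. F R n) < a" if "R \<ge> R0" for R
    proof -
      have "(SUP n. F R n) \<le> a/2" by (intro cSUP_least) (use R0[OF that] in auto)
      then show ?thesis using \<open>a > 0\<close> by simp
    qed
    then show ?thesis by (rule eventually_mono[OF eventually_ge_at_top])
  qed
qed

text \<open>Uniform concentration at every accuracy, with term-dependent centres, yields one sequence
  of centres with uniformly vanishing tails: fix centres for accuracy lam/3 and recenter.\<close>

lemma tightness_from_uniform_concentration:
  fixes f :: "nat \<Rightarrow> int \<Rightarrow> complex" and lam :: real
  assumes lam: "lam > 0" and f: "\<And>n. in_l2 (f n)" "\<And>n. l2_norm_sq (f n) = lam"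
    and conc: "\<And>\<epsilon>. 0 < \<epsilon> \<Longrightarrow> \<epsilon> < lam \<Longrightarrow> \<exists>R::nat. \<forall>n. \<exists>\<xi>. mass (f n) {x. \<bar>x - \<xi>\<bar> > int R} \<le> \<epsilon>"
  shows "\<exists>\<xi> :: nat \<Rightarrow> int.
    ((\<lambda>R::real. SUP n. (\<Sum>\<^sub>\<infinity>x\<in>{x. \<bar>real_of_int (x - \<xi> n)\<bar> > R}. (norm (f n x))\<^sup>2))
       \<longlongrightarrow> 0) at_top"
proof -
  obtain R0 :: nat where "\<forall>n. \<exists>\<xi>. mass (f n) {x. \<bar>x - \<xi>\<bar> > int R0} \<le> lam/3"
    using conc[of "lam/3"] lam by auto
  then obtain \<xi> where \<xi>: "\<And>n. mass (f n) {x. \<bar>x - \<xi> n\<bar> > int R0} \<le> lam/3" by metis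
  define F where "F R n = mass (f n) {x. \<bar>real_of_int (x - \<xi> n)\<bar> > R}" for R n
  have "((\<lambda>R. SUP n. F R n) \<longlongrightarrow> 0) at_top"
  proof (rule SUP_tendsto_zero_at_top)
    show "0 \<le> F R n" and "F R n \<le> lam" for R n
      unfolding F_def using mass_nonneg mass_le_l2[OF f(1)] f(2) by auto
    fix \<epsilon> :: real assume "\<epsilon> > 0"
    define \<epsilon>' where "\<epsilon>' = min \<epsilon> (lam/3)"
    have \<epsilon>': "0 < \<epsilon>'" "\<epsilon>' \<le> lam/3" "\<epsilon>' \<le> \<epsilon>" unfolding \<epsilon>'_def using \<open>\<epsilon> > 0\<close> lam by auto
    obtain R' :: nat where R': "\<forall>n. \<exists>\<xi>'. mass (f n) {x. \<bar>x - \<xi>'\<bar> > int R'} \<le> \<epsilon>'"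
      using conc[of \<epsilon>'] \<epsilon>' lam by auto
    have "F R n \<le> \<epsilon>" if R: "R \<ge> real_of_int (int R0 + 2 * int R')" for R n
    proof -
      obtain \<xi>' where "mass (f n) {x. \<bar>x - \<xi>'\<bar> > int R'} \<le> \<epsilon>'" using R' by blast
      then have "mass (f n) {x. \<bar>x - \<xi> n\<bar> > int R0 + 2 * int R'} \<le> \<epsilon>'"
        by (rule recentering[OF f(1)[of n] f(2)[of n] lam \<xi>[of n] _ \<epsilon>'(2)])
      moreover have "{x. \<bar>real_of_int (x - \<xi> n)\<bar> > R} \<subseteq> {x. \<bar>x - \<xi> n\<bar> > int R0 + 2 * int R'}"
        using R by auto
      ultimately show ?thesis unfolding F_def using mass_mono[OF f(1)] \<epsilon>'(3) by (meson order_trans)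
    qed
    then show "\<exists>R0. \<forall>R\<ge>R0. \<forall>n. F R n \<le> \<epsilon>" by blast
  qed
  then show ?thesis unfolding F_def mass_def by blast
qed

theorem proposition2p4:
  fixes \<mu> :: "real measure" and lam :: real and f :: "nat \<Rightarrow> int \<Rightarrow> complex"
  assumes "sets \<mu> = sets borel"
    and "emeasure \<mu> UNIV < \<infinity>"
    and "emeasure \<mu> UNIV \<noteq> 0"
    and "\<exists>R::real. emeasure \<mu> (- {-R..R}) = 0"
    and "lam > 0"
    and "\<And>n. in_l2 (f n)"
    and "\<And>n. l2_norm_sq (f n) = lam"
    and "(\<lambda>n. Qd \<mu> (f n) (f n) (f n) (f n)) \<longlonglongrightarrow> complex_of_real (Pd \<mu> lam)"
  shows "\<exists>\<xi> :: nat \<Rightarrow> int.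
    ((\<lambda>R::real. SUP n. (\<Sum>\<^sub>\<infinity>x\<in>{x. \<bar>real_of_int (x - \<xi> n)\<bar> > R}. (norm (f n x))\<^sup>2))
       \<longlongrightarrow> 0) at_top"
proof -
  obtain R where R: "emeasure \<mu> (- {-R..R}) = 0" using assms(4) by blast
  have supp: "AE r in \<mu>. \<bar>r\<bar> \<le> \<bar>R\<bar>"
  proof (rule AE_I')
    show "- {-R..R} \<in> null_sets \<mu>" using R assms(1) by (auto simp: null_sets_def)
  qed auto
  interpret bounded_support_measure \<mu> "\<bar>R\<bar>"
    by unfold_locales (use assms(1,2) supp in auto)
  have lim: "(\<lambda>n. quart (f n)) \<longlonglongrightarrow> Pd \<mu> lam"
    using tendsto_Re[OF assms(8)] Qd_diag_eq_quart[OF assms(6)] by simp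
  show ?thesis
    by (rule tightness_from_uniform_concentration[OF assms(5,6,7)])
       (rule uniform_concentration[OF assms(3,5,6,7) lim])
qed

end
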